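(* Let $\Gamma_1$ and $\Gamma_2$ be compact metric graphs with distinguished vertices $p_1\in\Gamma_1$, $p_2\in\Gamma_2$ such that $M^{\Gamma_1}_{p_1}=M^{\Gamma_2}_{p_2}$ ($\Gamma_1,\Gamma_2$ need not be isospectral). Let $\Gamma$ be a compact metric graph with two distinct vertices $a,b$. Let $G$ be obtained from $\Gamma$ by identifying $p_1$ with $a$ and $p_2$ with $b$, and let $G'$ be obtained from $\Gamma$ by identifying $p_2$ with $a$ and $p_1$ with $b$. Then $G$ and $G'$ are isospectral with standard vertex conditions.
   Context: Titchmarsh–Weil $M$-function: for a compact metric graph $\Gamma$ with a distinguished boundary vertex $v$ (all other vertices interior), and $k$ outside a discrete set, let $u$ satisfy $-u''=k^2u$ on each edge, be continuous at every vertex, satisfy the Kirchhoff condition (vanishing sum of outward normal derivatives) at every interior vertex, and have $u(v)\ne0$. Then $M^\Gamma_v(k)$ is defined by $M^\Gamma_v(k)u(v)=u'(v)$, where $u'(v)$ is the sum of outward normal derivatives of $u$ at $v$; equality of $M$-functions means equality as meromorphic functions of $k$. Standard (Neumann–Kirchhoff) vertex conditions: continuity and vanishing sum of outward normal derivatives at each vertex. Isospectral means same eigenvalues with multiplicities. *)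

theory Defs
  imports "HOL-Analysis.Analysis" "HOL-Library.Extended_Nat"
begin

text \<open>A finite metric graph: vertices, edges, each edge e identified with the
interval [0, elen e], running from etail e (at 0) to ehead e (at elen e).
Loops and multiple edges are allowed.\<close>

record ('v, 'e) mgraph =
  verts :: "'v set"
  edges :: "'e set"
  etail :: "'e \<Rightarrow> 'v"
  ehead :: "'e \<Rightarrow> 'v"
  elen  :: "'e \<Rightarrow> real"

definition compact_mgraph :: "('v, 'e) mgraph \<Rightarrow> bool" where
  "compact_mgraph G \<longleftrightarrow> finite (verts G) \<and> finite (edges G) \<and>
     (\<forall>e\<in>edges G. etail G e \<in> verts G \<and> ehead G e \<in> verts G \<and> 0 < elen G e)"

definition helmholtz :: "('v, 'e) mgraph \<Rightarrow> complex \<Rightarrow> ('e \<Rightarrow> real \<Rightarrow> complex)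
    \<Rightarrow> ('e \<Rightarrow> real \<Rightarrow> complex) \<Rightarrow> bool" where
  "helmholtz G z f D \<longleftrightarrow> (\<forall>e\<in>edges G. \<forall>x\<in>{0..elen G e}.
      (f e has_vector_derivative D e x) (at x within {0..elen G e}) \<and>
      (D e has_vector_derivative (- z * f e x)) (at x within {0..elen G e}))"

definition vertex_continuous :: "('v, 'e) mgraph \<Rightarrow> ('e \<Rightarrow> real \<Rightarrow> complex)
    \<Rightarrow> ('v \<Rightarrow> complex) \<Rightarrow> bool" where
  "vertex_continuous G f phi \<longleftrightarrow> (\<forall>e\<in>edges G.
      f e 0 = phi (etail G e) \<and> f e (elen G e) = phi (ehead G e))"

text \<open>Sum of outward normal derivatives at a vertex (loops contribute twice).\<close>
definition out_deriv :: "('v, 'e) mgraph \<Rightarrow> ('e \<Rightarrow> real \<Rightarrow> complex) \<Rightarrow> 'v \<Rightarrow> complex" where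
  "out_deriv G D v = (\<Sum>e\<in>{e\<in>edges G. etail G e = v}. D e 0)
                    - (\<Sum>e\<in>{e\<in>edges G. ehead G e = v}. D e (elen G e))"

text \<open>Eigenfunctions of the Laplacian with standard (Neumann-Kirchhoff) conditions
  for eigenvalue lam, normalised to vanish off the graph.\<close>
definition std_eigenfun :: "('v, 'e) mgraph \<Rightarrow> real \<Rightarrow> ('e \<Rightarrow> real \<Rightarrow> complex) \<Rightarrow> bool" where
  "std_eigenfun G lam f \<longleftrightarrow>
     (\<forall>e. e \<notin> edges G \<longrightarrow> (\<forall>x. f e x = 0)) \<and>
     (\<forall>e\<in>edges G. \<forall>x. x \<notin> {0..elen G e} \<longrightarrow> f e x = 0) \<and>
     (\<exists>phi D. helmholtz G (complex_of_real lam) f D \<and> vertex_continuous G f phi \<and>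
        (\<forall>v\<in>verts G. out_deriv G D v = 0))"

definition lin_indep_family :: "nat \<Rightarrow> (nat \<Rightarrow> 'e \<Rightarrow> real \<Rightarrow> complex) \<Rightarrow> bool" where
  "lin_indep_family n fs \<longleftrightarrow> (\<forall>c :: nat \<Rightarrow> complex.
      (\<forall>e x. (\<Sum>i<n. c i * fs i e x) = 0) \<longrightarrow> (\<forall>i<n. c i = 0))"

definition multiplicity_std :: "('v, 'e) mgraph \<Rightarrow> real \<Rightarrow> enat" where
  "multiplicity_std G lam = Sup {enat n | n. \<exists>fs. (\<forall>i<n. std_eigenfun G lam (fs i)) \<and>
                                                lin_indep_family n fs}"

definition isospectral_std :: "('v, 'e) mgraph \<Rightarrow> ('w, 'd) mgraph \<Rightarrow> bool" where
  "isospectral_std G H \<longleftrightarrow> (\<forall>lam. multiplicity_std G lam = multiplicity_std H lam)"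

definition M_value :: "('v, 'e) mgraph \<Rightarrow> 'v \<Rightarrow> complex \<Rightarrow> complex \<Rightarrow> bool" where
  "M_value G v k m \<longleftrightarrow> (\<exists>u phi D. helmholtz G (k\<^sup>2) u D \<and> vertex_continuous G u phi \<and>
       (\<forall>w\<in>verts G - {v}. out_deriv G D w = 0) \<and>
       phi v \<noteq> 0 \<and> out_deriv G D v = m * phi v)"

text \<open>Equality of M-functions as meromorphic functions: off a discrete set of k
  both M-functions are defined (single valued) and coincide.\<close>
definition same_M :: "('v, 'e) mgraph \<Rightarrow> 'v \<Rightarrow> ('w, 'd) mgraph \<Rightarrow> 'w \<Rightarrow> bool" where
  "same_M G1 p1 G2 p2 \<longleftrightarrow> (\<exists>S. S sparse_in UNIV \<and>
     (\<forall>k. k \<notin> S \<longrightarrow> (\<exists>m. (\<forall>m'. M_value G1 p1 k m' \<longleftrightarrow> m' = m) \<and>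
                          (\<forall>m'. M_value G2 p2 k m' \<longleftrightarrow> m' = m))))"

definition dunion :: "('v, 'e) mgraph \<Rightarrow> ('w, 'd) mgraph \<Rightarrow> ('v + 'w, 'e + 'd) mgraph" where
  "dunion G H = \<lparr> verts = Inl ` verts G \<union> Inr ` verts H,
                  edges = Inl ` edges G \<union> Inr ` edges H,
                  etail = case_sum (Inl \<circ> etail G) (Inr \<circ> etail H),
                  ehead = case_sum (Inl \<circ> ehead G) (Inr \<circ> ehead H),
                  elen = case_sum (elen G) (elen H) \<rparr>"

definition identify :: "('v, 'e) mgraph \<Rightarrow> 'v \<Rightarrow> 'v \<Rightarrow> ('v, 'e) mgraph" where
  "identify G x y = (let q = (\<lambda>z. if z = x then y else z) in
      \<lparr> verts = q ` verts G, edges = edges G,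
        etail = q \<circ> etail G, ehead = q \<circ> ehead G, elen = elen G \<rparr>)"

end

theory Submission
  imports Defs "HOL-Real_Asymp.Real_Asymp"
begin

(* For real lambda, the boundary data (value, outward derivative) at p of the solutions of
   -u'' = lambda u on a graph that satisfy the standard conditions away from p form a complex
   line: Green's identity makes this set Lagrangian. Equal M-functions give, for k off a sparse
   set, solutions on Gamma1 and Gamma2 with the same data (1, M(k)); normalising and letting
   k^2 tend to lambda, a compactness argument yields a common nonzero vector u on both lines.
   Fix solutions s1, s2 with data u. If an eigenfunction F of G has data alpha u at p1 and
   beta u at p2, then F + (beta - alpha) (s1 on Gamma1, -s2 on Gamma2, 0 on Gamma) has the data
   exchanged, so it is an eigenfunction of G', where p1 and p2 trade places. This transplantation
   is linear and involutive, so the eigenspaces of G and G' have the same dimension. *)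

section \<open>Fundamental solutions on an interval\<close>

definition fund_cos :: "complex \<Rightarrow> real \<Rightarrow> complex" where
  "fund_cos k x = cos (k * of_real x)"

definition fund_sin :: "complex \<Rightarrow> real \<Rightarrow> complex" where
  "fund_sin k x = (if k = 0 then of_real x else sin (k * of_real x) / k)"

lemma fund_cos_0 [simp]: "fund_cos k 0 = 1"
  and fund_sin_0 [simp]: "fund_sin k 0 = 0"
  by (auto simp: fund_cos_def fund_sin_def)

lemma fund_cos_has_vector_derivative:
  "(fund_cos k has_vector_derivative (- (k^2) * fund_sin k x)) (at x within S)"
proof -
  have "((\<lambda>w. cos (k * w)) has_field_derivative (- sin (k * of_real x) * k)) (at (of_real x))"
    by (auto intro!: derivative_eq_intros)
  from has_vector_derivative_real_field[OF this] show ?thesis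
    unfolding fund_cos_def fund_sin_def by (cases "k = 0") (auto simp: power2_eq_square field_simps)
qed

lemma fund_sin_has_vector_derivative:
  "(fund_sin k has_vector_derivative (fund_cos k x)) (at x within S)"
proof (cases "k = 0")
  case True
  have "((\<lambda>x. of_real x :: complex) has_vector_derivative 1) (at x within S)"
    by (auto intro!: derivative_eq_intros)
  then show ?thesis using True unfolding fund_sin_def fund_cos_def by simp
next
  case False
  have "((\<lambda>w. sin (k * w) / k) has_field_derivative (cos (k * of_real x) * k / k)) (at (of_real x))"
    by (auto intro!: derivative_eq_intros)
  from has_vector_derivative_real_field[OF this] show ?thesis
    using False unfolding fund_cos_def fund_sin_def by simp
qed

lemma fund_cos_sin_squared: "fund_cos k x ^ 2 + k^2 * fund_sin k x ^ 2 = 1"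
proof (cases "k = 0")
  case True then show ?thesis by (simp add: fund_cos_def fund_sin_def)
next
  case False
  then show ?thesis unfolding fund_cos_def fund_sin_def
    using sin_cos_squared_add[of "k * of_real x"] by (simp add: power_divide field_simps)
qed

text \<open>Uniqueness for \<open>f'' = -k\<^sup>2 f\<close>: the two Wronskian-type combinations \<open>W\<^sub>c, W\<^sub>s\<close> of the
  difference \<open>d\<close> with the fundamental pair are constant and vanish at \<open>0\<close>; the identity
  \<open>cos\<^sup>2 + k\<^sup>2 sin\<^sup>2 = 1\<close> then recovers \<open>d\<close> and \<open>d'\<close> from them.\<close>
lemma helmholtz_interval_explicit:
  fixes f D :: "real \<Rightarrow> complex"
  assumes hf: "\<And>x. x \<in> {0..L} \<Longrightarrow> (f has_vector_derivative D x) (at x within {0..L}) \<and>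
            (D has_vector_derivative (- (k^2) * f x)) (at x within {0..L})"
    and x: "x \<in> {0..L}"
  shows "f x = f 0 * fund_cos k x + D 0 * fund_sin k x \<and>
         D x = D 0 * fund_cos k x - k^2 * f 0 * fund_sin k x"
proof -
  define d where "d y = f y - (f 0 * fund_cos k y + D 0 * fund_sin k y)" for y
  define d' where "d' y = D y - (D 0 * fund_cos k y - k^2 * f 0 * fund_sin k y)" for y
  have dd: "(d has_vector_derivative d' y) (at y within {0..L})"
    and dd': "(d' has_vector_derivative (- (k^2) * d y)) (at y within {0..L})" if "y \<in> {0..L}" for y
    unfolding d_def d'_def using hf[OF that]
    by (auto intro!: derivative_eq_intros fund_cos_has_vector_derivative
        fund_sin_has_vector_derivative simp: algebra_simps)
  define Wc where "Wc y = d y * fund_cos k y - d' y * fund_sin k y" for y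
  define Ws where "Ws y = - (k^2) * d y * fund_sin k y - d' y * fund_cos k y" for y
  have "(Wc has_vector_derivative 0) (at y within {0..L})"
    and "(Ws has_vector_derivative 0) (at y within {0..L})" if "y \<in> {0..L}" for y
    unfolding Wc_def Ws_def
    by (rule derivative_eq_intros dd dd' that fund_cos_has_vector_derivative
        fund_sin_has_vector_derivative refl | simp add: algebra_simps)+
  then obtain c1 c2 where c: "\<And>y. y \<in> {0..L} \<Longrightarrow> Wc y = c1" "\<And>y. y \<in> {0..L} \<Longrightarrow> Ws y = c2"
    by (metis convex_real_interval(5) has_vector_derivative_zero_constant)
  have "0 \<in> {0..L}" using x by auto
  moreover have "Wc 0 = 0" "Ws 0 = 0" by (auto simp: Wc_def Ws_def d_def d'_def)
  ultimately have W0: "Wc x = 0" "Ws x = 0" using c x by metis+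
  have "d x * (fund_cos k x ^ 2 + k^2 * fund_sin k x ^ 2) = fund_cos k x * Wc x - fund_sin k x * Ws x"
    and "d' x * (fund_cos k x ^ 2 + k^2 * fund_sin k x ^ 2)
           = - (k^2) * fund_sin k x * Wc x - fund_cos k x * Ws x"
    by (simp_all add: Wc_def Ws_def algebra_simps power2_eq_square)
  then have "d x = 0" "d' x = 0" using W0 by (simp_all add: fund_cos_sin_squared)
  then show ?thesis by (auto simp: d_def d'_def)
qed

definition edge_sol :: "complex \<Rightarrow> ('e \<Rightarrow> complex) \<Rightarrow> ('e \<Rightarrow> complex) \<Rightarrow> 'e \<Rightarrow> real \<Rightarrow> complex" where
  "edge_sol k a b e t = a e * fund_cos k t + b e * fund_sin k t"

definition edge_sol_deriv :: "complex \<Rightarrow> ('e \<Rightarrow> complex) \<Rightarrow> ('e \<Rightarrow> complex) \<Rightarrow> 'e \<Rightarrow> real \<Rightarrow> complex" where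
  "edge_sol_deriv k a b e t = b e * fund_cos k t - k^2 * a e * fund_sin k t"

lemma edge_sol_has_vector_derivative:
  "(edge_sol k a b e has_vector_derivative edge_sol_deriv k a b e t) (at t within S)"
  "(edge_sol_deriv k a b e has_vector_derivative (- (k^2) * edge_sol k a b e t)) (at t within S)"
  unfolding edge_sol_def[abs_def] edge_sol_deriv_def[abs_def]
  by (auto intro!: derivative_eq_intros fund_cos_has_vector_derivative
      fund_sin_has_vector_derivative simp: algebra_simps)

lemma helmholtz_edge_sol: "helmholtz H (k^2) (edge_sol k a b) (edge_sol_deriv k a b)"
  unfolding helmholtz_def by (intro ballI conjI edge_sol_has_vector_derivative)

lemma helmholtz_eq_edge_sol:
  assumes h: "helmholtz H (k^2) f D" and e: "e \<in> edges H" and t: "t \<in> {0..elen H e}"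
  shows "f e t = edge_sol k (\<lambda>e. f e 0) (\<lambda>e. D e 0) e t"
    and "D e t = edge_sol_deriv k (\<lambda>e. f e 0) (\<lambda>e. D e 0) e t"
proof -
  have "\<forall>x\<in>{0..elen H e}. (f e has_vector_derivative D e x) (at x within {0..elen H e}) \<and>
          (D e has_vector_derivative (- (k^2) * f e x)) (at x within {0..elen H e})"
    using h e unfolding helmholtz_def by blast
  from helmholtz_interval_explicit[OF bspec[OF this] t] show
    "f e t = edge_sol k (\<lambda>e. f e 0) (\<lambda>e. D e 0) e t"
    "D e t = edge_sol_deriv k (\<lambda>e. f e 0) (\<lambda>e. D e 0) e t"
    unfolding edge_sol_def edge_sol_deriv_def by blast+
qed

section \<open>Solutions satisfying the Kirchhoff condition away from one vertex\<close>

definition kirchhoff_sol :: "('v,'e) mgraph \<Rightarrow> 'v \<Rightarrow> complex \<Rightarrow> ('e \<Rightarrow> real \<Rightarrow> complex)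
    \<Rightarrow> ('v \<Rightarrow> complex) \<Rightarrow> ('e \<Rightarrow> real \<Rightarrow> complex) \<Rightarrow> bool" where
  "kirchhoff_sol H p z f phi D \<longleftrightarrow> helmholtz H z f D \<and> vertex_continuous H f phi \<and>
    (\<forall>w\<in>verts H - {p}. out_deriv H D w = 0)"

lemma out_deriv_cong:
  assumes "\<And>e. e \<in> edges H \<Longrightarrow> D e 0 = D' e 0 \<and> D e (elen H e) = D' e (elen H e)"
  shows "out_deriv H D p = out_deriv H D' p"
  unfolding out_deriv_def using assms by (auto intro!: sum.cong arg_cong2[where f = "(-)"])

lemma out_deriv_add_scale:
  "out_deriv H (\<lambda>e x. D e x + c * E e x) p = out_deriv H D p + c * out_deriv H E p"
  by (simp add: out_deriv_def sum.distrib sum_distrib_left algebra_simps sum_subtractf)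

lemma out_deriv_scale: "out_deriv H (\<lambda>e x. c * D e x) p = c * out_deriv H D p"
  by (simp add: out_deriv_def sum_distrib_left right_diff_distrib)

lemma out_deriv_cnj: "out_deriv H (\<lambda>e x. cnj (D e x)) p = cnj (out_deriv H D p)"
  by (simp add: out_deriv_def)

lemma out_deriv_lincomb:
  "out_deriv H (\<lambda>e x. \<Sum>i<n. c i * D i e x) p = (\<Sum>i<n. c i * out_deriv H (D i) p)"
  unfolding out_deriv_def
  by (simp add: sum_subtractf right_diff_distrib sum_distrib_left sum.swap[of _ "{..<n}"])

lemma helmholtz_lincomb:
  assumes "\<And>i. i < n \<Longrightarrow> helmholtz H z (f i) (D i)"
  shows "helmholtz H z (\<lambda>e x. \<Sum>i<n. c i * f i e x) (\<lambda>e x. \<Sum>i<n. c i * D i e x)"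
  unfolding helmholtz_def
proof (intro ballI conjI)
  fix e x assume e: "e \<in> edges H" and x: "x \<in> {0..elen H e}"
  show "((\<lambda>x. \<Sum>i<n. c i * f i e x) has_vector_derivative (\<Sum>i<n. c i * D i e x))
          (at x within {0..elen H e})"
    using assms e x
    by (intro has_vector_derivative_sum has_vector_derivative_mult_right) (auto simp: helmholtz_def)
  have "((\<lambda>x. \<Sum>i<n. c i * D i e x) has_vector_derivative (\<Sum>i<n. c i * (- z * f i e x)))
          (at x within {0..elen H e})"
    using assms e x
    by (intro has_vector_derivative_sum has_vector_derivative_mult_right) (auto simp: helmholtz_def)
  then show "((\<lambda>x. \<Sum>i<n. c i * D i e x) has_vector_derivative (- z * (\<Sum>i<n. c i * f i e x)))
               (at x within {0..elen H e})"
    by (simp add: sum_distrib_left algebra_simps)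
qed

lemma kirchhoff_sol_add_scale:
  assumes "kirchhoff_sol H p z f phi D" "kirchhoff_sol H p z g psi E"
  shows "kirchhoff_sol H p z (\<lambda>e x. f e x + c * g e x) (\<lambda>v. phi v + c * psi v) (\<lambda>e x. D e x + c * E e x)"
  using assms
  unfolding kirchhoff_sol_def helmholtz_def vertex_continuous_def out_deriv_add_scale
  by (auto intro!: derivative_eq_intros simp: algebra_simps)

lemma kirchhoff_sol_scale:
  assumes "kirchhoff_sol H p z f phi D"
  shows "kirchhoff_sol H p z (\<lambda>e x. c * f e x) (\<lambda>v. c * phi v) (\<lambda>e x. c * D e x)"
  using assms
  unfolding kirchhoff_sol_def helmholtz_def vertex_continuous_def out_deriv_scale
  by (auto intro!: derivative_eq_intros simp: algebra_simps)

lemma kirchhoff_sol_cnj: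
  assumes "kirchhoff_sol H p z f phi D"
  shows "kirchhoff_sol H p (cnj z) (\<lambda>e x. cnj (f e x)) (\<lambda>v. cnj (phi v)) (\<lambda>e x. cnj (D e x))"
  using assms
  unfolding kirchhoff_sol_def helmholtz_def vertex_continuous_def out_deriv_cnj
  by (auto intro!: has_vector_derivative_cnj[THEN has_vector_derivative_eq_rhs])

lemma kirchhoff_sol_cong:
  assumes H: "compact_mgraph H" and s: "kirchhoff_sol H p z f phi D"
    and eq: "\<And>e x. e \<in> edges H \<Longrightarrow> x \<in> {0..elen H e} \<Longrightarrow> f e x = g e x"
  shows "kirchhoff_sol H p z g phi D"
proof -
  have "(g e has_vector_derivative D e x) (at x within {0..elen H e})"
    if "e \<in> edges H" "x \<in> {0..elen H e}" for e x
  proof -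
    have "(f e has_vector_derivative D e x) (at x within {0..elen H e})"
      using s that by (auto simp: kirchhoff_sol_def helmholtz_def)
    then show ?thesis
      by (rule has_vector_derivative_transform_within[OF _ zero_less_one that(2)]) (use eq that in auto)
  qed
  moreover have "0 \<le> elen H e" if "e \<in> edges H" for e
    using H that by (auto simp: compact_mgraph_def)
  ultimately show ?thesis
    using s eq by (auto simp: kirchhoff_sol_def helmholtz_def vertex_continuous_def)
qed

lemma kirchhoff_sol_reset_value:
  assumes "kirchhoff_sol H p z f phi D"
    and "\<And>e. e \<in> edges H \<Longrightarrow> etail H e = q \<Longrightarrow> f e 0 = w"
    and "\<And>e. e \<in> edges H \<Longrightarrow> ehead H e = q \<Longrightarrow> f e (elen H e) = w"
  shows "kirchhoff_sol H p z f (phi(q := w)) D"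
  using assms unfolding kirchhoff_sol_def vertex_continuous_def by auto

section \<open>Green's identity\<close>

lemma sum_vertices_incident:
  fixes phi :: "'v \<Rightarrow> 'a::comm_ring_1"
  assumes "finite V" "finite E" "\<And>e. e \<in> E \<Longrightarrow> t e \<in> V"
  shows "(\<Sum>v\<in>V. phi v * (\<Sum>e\<in>{e\<in>E. t e = v}. h e)) = (\<Sum>e\<in>E. phi (t e) * h e)"
proof -
  have "(\<Sum>v\<in>V. phi v * (\<Sum>e\<in>{e\<in>E. t e = v}. h e))
      = (\<Sum>v\<in>V. \<Sum>e\<in>{e\<in>E. t e = v}. phi (t e) * h e)"
    by (simp add: sum_distrib_left)
  also have "\<dots> = (\<Sum>e\<in>E. phi (t e) * h e)"
    using assms by (intro sum.group) auto
  finally show ?thesis .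
qed

lemma sum_vertices_out_deriv:
  assumes "compact_mgraph H"
  shows "(\<Sum>v\<in>verts H. phi v * out_deriv H E v) =
     (\<Sum>e\<in>edges H. phi (etail H e) * E e 0 - phi (ehead H e) * E e (elen H e))"
proof -
  have "finite (verts H)" "finite (edges H)"
    and "\<And>e. e \<in> edges H \<Longrightarrow> etail H e \<in> verts H \<and> ehead H e \<in> verts H"
    using assms by (auto simp: compact_mgraph_def)
  then show ?thesis
    unfolding out_deriv_def right_diff_distrib sum.distrib sum_subtractf
    by (simp add: sum_vertices_incident)
qed

lemma green_interval:
  fixes f g D E :: "real \<Rightarrow> complex"
  assumes L: "0 \<le> L"
    and hf: "\<And>x. x \<in> {0..L} \<Longrightarrow> (f has_vector_derivative D x) (at x within {0..L}) \<and>
            (D has_vector_derivative (- z * f x)) (at x within {0..L})"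
    and hg: "\<And>x. x \<in> {0..L} \<Longrightarrow> (g has_vector_derivative E x) (at x within {0..L}) \<and>
            (E has_vector_derivative (- w * g x)) (at x within {0..L})"
  shows "(w - z) * integral {0..L} (\<lambda>x. f x * g x)
           = (D L * g L - f L * E L) - (D 0 * g 0 - f 0 * E 0)"
proof -
  have "((\<lambda>x. D x * g x - f x * E x) has_vector_derivative ((w - z) * (f x * g x)))
          (at x within {0..L})" if "x \<in> {0..L}" for x
  proof -
    have "((\<lambda>x. D x * g x - f x * E x) has_vector_derivative
       (D x * E x + (- z * f x) * g x - (f x * (- w * g x) + D x * E x))) (at x within {0..L})"
      using hf[OF that] hg[OF that] by (intro has_vector_derivative_diff has_vector_derivative_mult) auto
    then show ?thesis by (simp add: algebra_simps)
  qed
  from fundamental_theorem_of_calculus[OF L this]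
  have "((\<lambda>x. (w - z) * (f x * g x)) has_integral
          ((D L * g L - f L * E L) - (D 0 * g 0 - f 0 * E 0))) {0..L}"
    by simp
  then show ?thesis
    by (simp add: integral_unique flip: integral_mult_right)
qed

lemma kirchhoff_sol_green:
  assumes H: "compact_mgraph H" and p: "p \<in> verts H"
    and sf: "kirchhoff_sol H p z f phi D" and sg: "kirchhoff_sol H p w g psi E"
  shows "(w - z) * (\<Sum>e\<in>edges H. integral {0..elen H e} (\<lambda>x. f e x * g e x))
       = phi p * out_deriv H E p - psi p * out_deriv H D p"
proof -
  have fin: "finite (verts H)" and L: "\<And>e. e \<in> edges H \<Longrightarrow> 0 < elen H e"
    using H by (auto simp: compact_mgraph_def)
  have "(w - z) * (\<Sum>e\<in>edges H. integral {0..elen H e} (\<lambda>x. f e x * g e x))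
     = (\<Sum>e\<in>edges H. (D e (elen H e) * g e (elen H e) - f e (elen H e) * E e (elen H e))
        - (D e 0 * g e 0 - f e 0 * E e 0))"
    unfolding sum_distrib_left
  proof (rule sum.cong[OF refl])
    fix e assume e: "e \<in> edges H"
    show "(w - z) * integral {0..elen H e} (\<lambda>x. f e x * g e x)
        = (D e (elen H e) * g e (elen H e) - f e (elen H e) * E e (elen H e))
          - (D e 0 * g e 0 - f e 0 * E e 0)"
      using L[OF e] sf sg e
      by (intro green_interval) (auto simp: kirchhoff_sol_def helmholtz_def)
  qed
  also have "\<dots> = (\<Sum>e\<in>edges H. phi (etail H e) * E e 0 - phi (ehead H e) * E e (elen H e))
          - (\<Sum>e\<in>edges H. psi (etail H e) * D e 0 - psi (ehead H e) * D e (elen H e))"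
    using sf sg
    by (auto simp: kirchhoff_sol_def vertex_continuous_def sum_subtractf[symmetric] algebra_simps
        intro!: sum.cong)
  also have "\<dots> = (\<Sum>v\<in>verts H. phi v * out_deriv H E v) - (\<Sum>v\<in>verts H. psi v * out_deriv H D v)"
    using sum_vertices_out_deriv[OF H] by simp
  also have "\<dots> = phi p * out_deriv H E p - psi p * out_deriv H D p"
  proof -
    have "(\<Sum>v\<in>verts H. phi v * out_deriv H E v) = phi p * out_deriv H E p"
      "(\<Sum>v\<in>verts H. psi v * out_deriv H D v) = psi p * out_deriv H D p"
      using sf sg p fin by (subst sum.remove[of _ p]; auto simp: kirchhoff_sol_def intro!: sum.neutral)+
    then show ?thesis by simp
  qed
  finally show ?thesis .
qed

section \<open>Boundary data\<close>

definition boundary_data :: "('v,'e) mgraph \<Rightarrow> 'v \<Rightarrow> complex \<Rightarrow> (complex \<times> complex) set" where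
  "boundary_data H p z =
     {(x, y). \<exists>f phi D. kirchhoff_sol H p z f phi D \<and> phi p = x \<and> out_deriv H D p = y}"

lemma boundary_data_scale:
  "(x, y) \<in> boundary_data H p z \<Longrightarrow> (c * x, c * y) \<in> boundary_data H p z"
proof -
  assume "(x, y) \<in> boundary_data H p z"
  then obtain f phi D where "kirchhoff_sol H p z f phi D" "phi p = x" "out_deriv H D p = y"
    by (auto simp: boundary_data_def)
  then have "kirchhoff_sol H p z (\<lambda>e t. c * f e t) (\<lambda>v. c * phi v) (\<lambda>e t. c * D e t)"
    "c * phi p = c * x" "out_deriv H (\<lambda>e t. c * D e t) p = c * y"
    by (simp_all add: kirchhoff_sol_scale out_deriv_scale)
  then show ?thesis unfolding boundary_data_def by blast
qed

text \<open>At a real spectral parameter the boundary data form a Lagrangian subspace: apply Green's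
  identity to one solution and the conjugate of the other.\<close>
lemma boundary_data_hermitian:
  assumes H: "compact_mgraph H" and p: "p \<in> verts H"
    and "(x1, y1) \<in> boundary_data H p (of_real lam)" and "(x2, y2) \<in> boundary_data H p (of_real lam)"
  shows "x1 * cnj y2 = cnj x2 * y1"
proof -
  obtain f phi D where f: "kirchhoff_sol H p (of_real lam) f phi D" "phi p = x1" "out_deriv H D p = y1"
    using assms(3) by (auto simp: boundary_data_def)
  obtain g psi E where g: "kirchhoff_sol H p (of_real lam) g psi E" "psi p = x2" "out_deriv H E p = y2"
    using assms(4) by (auto simp: boundary_data_def)
  from kirchhoff_sol_green[OF H p f(1) kirchhoff_sol_cnj[OF g(1)]] show ?thesis
    using f g by (simp add: out_deriv_cnj)
qed

lemma hermitian_collinear: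
  fixes u1 u2 v1 v2 :: complex
  assumes u: "(u1, u2) \<noteq> (0, 0)" and uu: "u1 * cnj u2 = cnj u1 * u2"
    and vu: "v1 * cnj u2 = cnj u1 * v2"
  shows "\<exists>c. v1 = c * u1 \<and> v2 = c * u2"
proof (cases "u1 = 0")
  case True
  then have "u2 \<noteq> 0" "v1 = 0" using u vu by auto
  then show ?thesis using True by (intro exI[of _ "v2 / u2"]) simp
next
  case False
  then have "cnj u2 / cnj u1 = u2 / u1" using uu by (simp add: field_simps)
  moreover have "v2 = v1 * cnj u2 / cnj u1" using vu False by (simp add: field_simps)
  ultimately have "v2 = v1 / u1 * u2" by (metis times_divide_eq_right mult.commute)
  then show ?thesis using False by (intro exI[of _ "v1 / u1"]) simp
qed

lemma boundary_data_collinear: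
  assumes H: "compact_mgraph H" and p: "p \<in> verts H" and u: "u \<noteq> (0, 0)"
    and u_data: "u \<in> boundary_data H p (of_real lam)"
    and xy: "(x, y) \<in> boundary_data H p (of_real lam)"
  shows "\<exists>c. x = c * fst u \<and> y = c * snd u"
proof (rule hermitian_collinear)
  show "(fst u, snd u) \<noteq> (0, 0)" using u by simp
  have "(fst u, snd u) \<in> boundary_data H p (of_real lam)" using u_data by simp
  from boundary_data_hermitian[OF H p this this] boundary_data_hermitian[OF H p xy this]
  show "fst u * cnj (snd u) = cnj (fst u) * snd u" "x * cnj (snd u) = cnj (fst u) * y" .
qed

lemma helmholtz_zero_if_norm_integral_zero:
  assumes H: "compact_mgraph H" and h: "helmholtz H z g E"
    and s: "(\<Sum>e\<in>edges H. integral {0..elen H e} (\<lambda>t. g e t * cnj (g e t))) = 0"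
    and e: "e \<in> edges H" and t: "t \<in> {0..elen H e}"
  shows "g e t = 0"
proof -
  have fin: "finite (edges H)" and L: "\<And>e. e \<in> edges H \<Longrightarrow> 0 < elen H e"
    using H by (auto simp: compact_mgraph_def)
  have "continuous_on {0..elen H e} (g e)" if "e \<in> edges H" for e
    using h that by (auto simp: helmholtz_def intro!: continuous_on_vector_derivative)
  then have cont: "continuous_on {0..elen H e} (\<lambda>t. (cmod (g e t))^2)" if "e \<in> edges H" for e
    using that by (intro continuous_intros) auto
  define I where "I e = integral {0..elen H e} (\<lambda>t. (cmod (g e t))^2)" for e
  have I: "((\<lambda>t. (cmod (g e t))^2) has_integral I e) {0..elen H e}" if "e \<in> edges H" for e
    unfolding I_def by (intro integrable_integral integrable_continuous_interval cont that)
  have "integral {0..elen H e} (\<lambda>t. g e t * cnj (g e t)) = of_real (I e)" if "e \<in> edges H" for e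
  proof (rule integral_unique)
    show "((\<lambda>t. g e t * cnj (g e t)) has_integral of_real (I e)) {0..elen H e}"
      using has_integral_of_real[OF I[OF that]] by (simp flip: complex_norm_square)
  qed
  then have "(\<Sum>e\<in>edges H. of_real (I e) :: complex) = 0" using s by simp
  then have "of_real (\<Sum>e\<in>edges H. I e) = (0::complex)" by (simp only: of_real_sum)
  moreover have "\<And>d. d \<in> edges H \<Longrightarrow> 0 \<le> I d"
    using I by (metis has_integral_nonneg zero_le_power2)
  ultimately have "I e = 0" using sum_nonneg_eq_0_iff[of "edges H" I] fin e by (simp only: of_real_eq_0_iff)
  then have "((\<lambda>t. (cmod (g e t))^2) has_integral 0) (cbox 0 (elen H e))" using I[OF e] by simp
  then have "(cmod (g e t))^2 = 0"
    using cont[OF e] L[OF e] t by (intro has_integral_0_cbox_imp_0[of 0 "elen H e"]) auto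
  then show ?thesis by simp
qed

lemma has_vector_derivative_vanishing_at_left_end:
  fixes f :: "real \<Rightarrow> 'a::real_normed_vector"
  assumes L: "0 < L" and d: "(f has_vector_derivative f') (at 0 within {0..L})"
    and zero: "\<And>x. x \<in> {0..L} \<Longrightarrow> f x = 0"
  shows "f' = 0"
proof -
  have L0: "(0::real) \<in> cbox 0 L" using L by simp
  have "((\<lambda>t. 0) has_vector_derivative f') (at 0 within {0..L})"
    using L zero by (intro has_vector_derivative_transform_within[OF d zero_less_one]) auto
  then have "vector_derivative (\<lambda>t. 0) (at 0 within cbox 0 L) = f'"
    by (intro vector_derivative_within_cbox[OF L L0]) (simp add: cbox_interval)
  moreover have "vector_derivative (\<lambda>t. 0) (at 0 within cbox 0 L) = 0"
    by (intro vector_derivative_within_cbox[OF L L0] has_vector_derivative_const)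
  ultimately show ?thesis by metis
qed

section \<open>Limits of solutions\<close>

definition sinc :: "complex \<Rightarrow> complex" where
  "sinc w = (if w = 0 then 1 else sin w / w)"

lemma isCont_sinc: "isCont sinc w"
proof (cases "w = 0")
  case True
  have "((\<lambda>h. (sin (0 + h) - sin 0) / h) \<longlongrightarrow> cos 0) (at (0::complex))"
    by (rule DERIV_D) (auto intro!: derivative_eq_intros)
  then have "((\<lambda>h. sin h / h) \<longlongrightarrow> 1) (at (0::complex))" by simp
  then have "(sinc \<longlongrightarrow> 1) (at 0)"
    by (rule tendsto_cong[THEN iffD1, rotated]) (auto simp: sinc_def eventually_at_filter)
  then show ?thesis using True by (simp add: isCont_def sinc_def)
next
  case False
  have "\<forall>\<^sub>F x in nhds w. sin x / x = sinc x"
    using eventually_nhds_in_open[of "-{0}" w] False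
    by (auto elim!: eventually_mono simp: sinc_def)
  moreover have "isCont (\<lambda>w. sin w / w) w" using False by (auto intro!: continuous_intros)
  ultimately show ?thesis using isCont_cong[of "\<lambda>x. sin x / x" sinc w] by blast
qed

lemma fund_sin_sinc: "fund_sin k t = of_real t * sinc (k * of_real t)"
  by (auto simp: fund_sin_def sinc_def field_simps)

lemma continuous_on_fund_sin [continuous_intros]:
  fixes f :: "'a::t2_space \<Rightarrow> complex"
  shows
  "continuous_on S f \<Longrightarrow> continuous_on S g \<Longrightarrow> continuous_on S (\<lambda>z. fund_sin (f z) (g z))"
proof -
  assume f: "continuous_on S f" and g: "continuous_on S g"
  have "continuous_on UNIV sinc" by (simp add: continuous_at_imp_continuous_on isCont_sinc)
  from continuous_on_compose2[OF this continuous_on_mult[OF f continuous_on_of_real[OF g]]]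
  have "continuous_on S (\<lambda>z. sinc (f z * of_real (g z)))" by simp
  then show ?thesis unfolding fund_sin_sinc using g by (intro continuous_intros)
qed

lemma continuous_on_fund_cos [continuous_intros]:
  fixes f :: "'a::t2_space \<Rightarrow> complex"
  shows
  "continuous_on S f \<Longrightarrow> continuous_on S g \<Longrightarrow> continuous_on S (\<lambda>z. fund_cos (f z) (g z))"
proof -
  assume f: "continuous_on S f" and g: "continuous_on S g"
  show ?thesis
    unfolding fund_cos_def by (rule continuous_on_cos[OF continuous_on_mult[OF f continuous_on_of_real[OF g]]])
qed

lemma tendsto_edge_sol:
  assumes "kk \<longlonglongrightarrow> k0" "(\<lambda>n. A n e) \<longlonglongrightarrow> a e" "(\<lambda>n. B n e) \<longlonglongrightarrow> b e"
  shows "(\<lambda>n. edge_sol (kk n) (A n) (B n) e t) \<longlonglongrightarrow> edge_sol k0 a b e t"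
    and "(\<lambda>n. edge_sol_deriv (kk n) (A n) (B n) e t) \<longlonglongrightarrow> edge_sol_deriv k0 a b e t"
  unfolding edge_sol_def edge_sol_deriv_def fund_sin_sinc fund_cos_def
  using assms by (auto intro!: tendsto_intros isCont_tendsto_compose[OF isCont_sinc])

lemma finite_family_convergent_subseq:
  fixes X :: "nat \<Rightarrow> 'e \<Rightarrow> 'b::{heine_borel,real_normed_vector}"
  assumes "finite E" and "\<And>n e. e \<in> E \<Longrightarrow> norm (X n e) \<le> M"
  shows "\<exists>r l. strict_mono r \<and> (\<forall>e\<in>E. (\<lambda>n. X (r n) e) \<longlonglongrightarrow> l e)"
  using assms
proof (induction E arbitrary: X rule: finite_induct)
  case empty
  show ?case by (intro exI[of _ id]) (auto simp: strict_mono_def)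
next
  case (insert e F)
  obtain r1 l1 where r1: "strict_mono r1" "\<forall>e\<in>F. (\<lambda>n. X (r1 n) e) \<longlonglongrightarrow> l1 e"
    using insert.IH[of X] insert.prems by auto
  have "bounded (range (\<lambda>n. X (r1 n) e))"
    using insert.prems by (auto simp: bounded_iff)
  then obtain l r2 where r2: "strict_mono r2" "((\<lambda>n. X (r1 n) e) \<circ> r2) \<longlonglongrightarrow> l"
    using bounded_imp_convergent_subsequence by blast
  have "(\<lambda>n. X ((r1 \<circ> r2) n) e') \<longlonglongrightarrow> (l1(e := l)) e'" if "e' \<in> insert e F" for e'
    using that r2 LIMSEQ_subseq_LIMSEQ[OF r1(2)[rule_format] r2(1)] insert.hyps(2)
    by (auto simp: o_def)
  then show ?case
    using strict_mono_o[OF r1(1) r2(1)] by (intro exI[of _ "r1 \<circ> r2"] exI[of _ "l1(e := l)"]) (auto simp: o_def)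
qed

lemma kirchhoff_sol_limit:
  assumes H: "compact_mgraph H" and kk: "kk \<longlonglongrightarrow> k0"
    and sol: "\<And>n. kirchhoff_sol H p ((kk n)^2) (g n) (ph n) (D n)"
    and a: "\<And>e. e \<in> edges H \<Longrightarrow> (\<lambda>n. g n e 0) \<longlonglongrightarrow> a e"
    and b: "\<And>e. e \<in> edges H \<Longrightarrow> (\<lambda>n. D n e 0) \<longlonglongrightarrow> b e"
    and x: "(\<lambda>n. ph n p) \<longlonglongrightarrow> x" and y: "(\<lambda>n. out_deriv H (D n) p) \<longlonglongrightarrow> y"
  shows "\<exists>phi. kirchhoff_sol H p (k0^2) (edge_sol k0 a b) phi (edge_sol_deriv k0 a b) \<and>
           phi p = x \<and> out_deriv H (edge_sol_deriv k0 a b) p = y"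
proof -
  let ?h = "edge_sol k0 a b" and ?Dh = "edge_sol_deriv k0 a b"
  have L: "\<And>e. e \<in> edges H \<Longrightarrow> 0 \<le> elen H e" using H by (auto simp: compact_mgraph_def)
  have "(\<lambda>n. g n e t) \<longlonglongrightarrow> ?h e t" "(\<lambda>n. D n e t) \<longlonglongrightarrow> ?Dh e t"
    if "e \<in> edges H" "t \<in> {0..elen H e}" for e t
  proof -
    have "helmholtz H ((kk n)^2) (g n) (D n)" for n using sol by (simp add: kirchhoff_sol_def)
    note eq = helmholtz_eq_edge_sol[OF this that]
    show "(\<lambda>n. g n e t) \<longlonglongrightarrow> ?h e t" "(\<lambda>n. D n e t) \<longlonglongrightarrow> ?Dh e t"
      unfolding eq using tendsto_edge_sol[where A = "\<lambda>n e. g n e 0" and B = "\<lambda>n e. D n e 0"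
        and a = a and b = b and e = e and t = t, OF kk a[OF that(1)] b[OF that(1)]] by blast+
  qed
  note lim_g = this(1) and lim_D = this(2)
  have lim_out: "(\<lambda>n. out_deriv H (D n) w) \<longlonglongrightarrow> out_deriv H ?Dh w" for w
    unfolding out_deriv_def using lim_D L by (intro tendsto_diff tendsto_sum) simp_all
  define phi where "phi v = lim (\<lambda>n. ph n v)" for v
  have "vertex_continuous H ?h phi"
    unfolding vertex_continuous_def
  proof (intro ballI conjI)
    fix e assume e: "e \<in> edges H"
    have "(\<lambda>n. ph n (etail H e)) = (\<lambda>n. g n e 0)" "(\<lambda>n. ph n (ehead H e)) = (\<lambda>n. g n e (elen H e))"
      using sol e by (auto simp: kirchhoff_sol_def vertex_continuous_def)
    moreover have "(\<lambda>n. g n e 0) \<longlonglongrightarrow> ?h e 0" "(\<lambda>n. g n e (elen H e)) \<longlonglongrightarrow> ?h e (elen H e)"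
      using lim_g[OF e] L[OF e] by simp_all
    ultimately show "?h e 0 = phi (etail H e)" "?h e (elen H e) = phi (ehead H e)"
      unfolding phi_def by (simp_all add: limI)
  qed
  moreover have "\<forall>w\<in>verts H - {p}. out_deriv H ?Dh w = 0"
  proof
    fix w assume "w \<in> verts H - {p}"
    then have "(\<lambda>n. out_deriv H (D n) w) = (\<lambda>n. 0)" using sol by (simp add: kirchhoff_sol_def)
    then show "out_deriv H ?Dh w = 0" using lim_out[of w] LIMSEQ_unique[OF tendsto_const] by metis
  qed
  moreover have "phi p = x" unfolding phi_def using x by (rule limI)
  moreover have "out_deriv H ?Dh p = y" using lim_out[of p] y LIMSEQ_unique by blast
  ultimately show ?thesis using helmholtz_edge_sol unfolding kirchhoff_sol_def by blast
qed

lemma edge_sol_vanishing: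
  assumes L: "0 < L" and zero: "\<And>t. t \<in> {0..L} \<Longrightarrow> edge_sol k a b e t = 0"
  shows "a e = 0 \<and> b e = 0"
proof
  show "a e = 0" using zero[of 0] L by (simp add: edge_sol_def)
  have "b e = edge_sol_deriv k a b e 0" by (simp add: edge_sol_deriv_def)
  then show "b e = 0"
    using has_vector_derivative_vanishing_at_left_end[OF L edge_sol_has_vector_derivative(1) zero]
    by simp
qed

lemma kirchhoff_sol_orthogonal:
  assumes H: "compact_mgraph H" and p: "p \<in> verts H"
    and h: "kirchhoff_sol H p z h phi Dh" "phi p = 0" "out_deriv H Dh p = 0" and real: "cnj z = z"
    and g: "kirchhoff_sol H p w g psi D" and ne: "w \<noteq> z"
  shows "(\<Sum>e\<in>edges H. integral {0..elen H e} (\<lambda>t. cnj (h e t) * g e t)) = 0"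
  using kirchhoff_sol_green[OF H p kirchhoff_sol_cnj[OF h(1)] g] h(2,3) real ne
  by (simp add: out_deriv_cnj)

text \<open>If the limit solution \<open>h\<close> has vanishing boundary data, it is orthogonal to all the
  approximating solutions; passing to the limit gives \<open>\<integral> |h|\<^sup>2 = 0\<close>.\<close>
lemma kirchhoff_sol_limit_vanishes:
  assumes H: "compact_mgraph H" and p: "p \<in> verts H" and kk: "kk \<longlonglongrightarrow> k0"
    and kne: "\<And>n. (kk n)^2 \<noteq> k0^2" and real: "cnj (k0^2) = k0^2"
    and sol: "\<And>n. kirchhoff_sol H p ((kk n)^2) (g n) (ph n) (D n)"
    and a: "\<And>e. e \<in> edges H \<Longrightarrow> (\<lambda>n. g n e 0) \<longlonglongrightarrow> a e"
    and b: "\<And>e. e \<in> edges H \<Longrightarrow> (\<lambda>n. D n e 0) \<longlonglongrightarrow> b e"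
    and x: "(\<lambda>n. ph n p) \<longlonglongrightarrow> 0" and y: "(\<lambda>n. out_deriv H (D n) p) \<longlonglongrightarrow> 0"
    and e: "e \<in> edges H"
  shows "a e = 0 \<and> b e = 0"
proof -
  let ?h = "edge_sol k0 a b"
  obtain phi where hs: "kirchhoff_sol H p (k0^2) ?h phi (edge_sol_deriv k0 a b)" "phi p = 0"
    "out_deriv H (edge_sol_deriv k0 a b) p = 0"
    using kirchhoff_sol_limit[OF H kk sol a b x y] by blast
  define F where "F e q = integral {0..elen H e} (\<lambda>t. cnj (?h e t) *
      (fst q * fund_cos (snd (snd q)) t + fst (snd q) * fund_sin (snd (snd q)) t))"
    for e and q :: "complex \<times> complex \<times> complex"
  have "integral {0..elen H e} (\<lambda>t. cnj (?h e t) * g n e t) = F e (g n e 0, D n e 0, kk n)"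
    if "e \<in> edges H" for n e
    unfolding F_def
  proof (intro integral_cong)
    fix t assume "t \<in> {0..elen H e}"
    then have "g n e t = edge_sol (kk n) (\<lambda>e. g n e 0) (\<lambda>e. D n e 0) e t"
      using sol[of n] that by (intro helmholtz_eq_edge_sol(1)) (auto simp: kirchhoff_sol_def)
    then show "cnj (?h e t) * g n e t = cnj (?h e t) * (fst (g n e 0, D n e 0, kk n) *
        fund_cos (snd (snd (g n e 0, D n e 0, kk n))) t + fst (snd (g n e 0, D n e 0, kk n)) *
        fund_sin (snd (snd (g n e 0, D n e 0, kk n))) t)"
      by (simp add: edge_sol_def)
  qed
  then have "(\<Sum>e\<in>edges H. F e (g n e 0, D n e 0, kk n)) = 0" for n
    using kirchhoff_sol_orthogonal[OF H p hs real sol[of n] kne[of n]] by simp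
  moreover have "(\<lambda>n. \<Sum>e\<in>edges H. F e (g n e 0, D n e 0, kk n)) \<longlonglongrightarrow> (\<Sum>e\<in>edges H. F e (a e, b e, k0))"
  proof (intro tendsto_sum)
    fix e
    have "continuous_on (UNIV \<times> cbox 0 (elen H e)) (\<lambda>(q, t). cnj (?h e t) *
        (fst q * fund_cos (snd (snd q)) t + fst (snd q) * fund_sin (snd (snd q)) t))"
      unfolding edge_sol_def case_prod_unfold by (intro continuous_intros)
    from integral_continuous_on_param[OF this] have "continuous_on UNIV (F e)"
      unfolding F_def by simp
    moreover assume "e \<in> edges H"
    then have "(\<lambda>n. (g n e 0, D n e 0, kk n)) \<longlonglongrightarrow> (a e, b e, k0)"
      by (intro tendsto_Pair a b kk)
    ultimately show "(\<lambda>n. F e (g n e 0, D n e 0, kk n)) \<longlonglongrightarrow> F e (a e, b e, k0)"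
      using continuous_on_tendsto_compose by fastforce
  qed
  ultimately have "(\<Sum>e\<in>edges H. F e (a e, b e, k0)) = 0"
    using LIMSEQ_unique[OF _ tendsto_const] by simp
  moreover have "F e (a e, b e, k0) = integral {0..elen H e} (\<lambda>t. ?h e t * cnj (?h e t))" for e
    unfolding F_def edge_sol_def by (simp add: mult.commute)
  ultimately have "(\<Sum>e\<in>edges H. integral {0..elen H e} (\<lambda>t. ?h e t * cnj (?h e t))) = 0"
    by simp
  then have "?h e t = 0" if "t \<in> {0..elen H e}" for t
    using helmholtz_zero_if_norm_integral_zero[OF H helmholtz_edge_sol _ e that] by blast
  moreover have "0 < elen H e" using H e by (simp add: compact_mgraph_def)
  ultimately show ?thesis by (intro edge_sol_vanishing[where L = "elen H e"])
qed

lemma normalised_convergent_subseq: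
  fixes X Y :: "nat \<Rightarrow> 'e \<Rightarrow> complex"
  assumes fin: "finite E"
  shows "\<exists>r (c :: nat \<Rightarrow> complex) c0 a b. strict_mono r \<and> (\<lambda>n. c (r n)) \<longlonglongrightarrow> c0 \<and>
    (\<forall>e\<in>E. (\<lambda>n. c (r n) * X (r n) e) \<longlonglongrightarrow> a e \<and> (\<lambda>n. c (r n) * Y (r n) e) \<longlonglongrightarrow> b e) \<and>
    (c0 = 0 \<longrightarrow> (\<Sum>e\<in>E. cmod (a e) + cmod (b e)) = 1)"
proof -
  define N where "N n = (\<Sum>e\<in>E. cmod (X n e) + cmod (Y n e))" for n
  define c where "c n = complex_of_real (1 / (1 + N n))" for n
  have N0: "0 \<le> N n" for n unfolding N_def by (intro sum_nonneg) auto
  then have norm_c: "cmod (c n) = 1 / (1 + N n)" for n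
    unfolding c_def norm_of_real by (simp add: add_nonneg_nonneg)
  have size_c: "(\<Sum>e\<in>E. cmod (c n * X n e) + cmod (c n * Y n e)) = 1 - cmod (c n)" for n
  proof -
    have "(\<Sum>e\<in>E. cmod (c n * X n e) + cmod (c n * Y n e)) = cmod (c n) * N n"
      unfolding N_def by (simp add: norm_mult sum_distrib_left distrib_left)
    also have "\<dots> = 1 - cmod (c n)" using N0[of n] by (simp add: norm_c field_simps)
    finally show ?thesis .
  qed
  have "norm (c n * X n e, c n * Y n e) \<le> 1" if "e \<in> E" for n e
  proof -
    have "cmod (c n * X n e) + cmod (c n * Y n e) \<le> 1 - cmod (c n)"
      unfolding size_c[symmetric] using fin that by (intro member_le_sum) auto
    then show ?thesis using norm_Pair_le[of "c n * X n e" "c n * Y n e"] norm_ge_zero[of "c n"]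
      by linarith
  qed
  moreover have "cmod (c n) \<le> 1" for n using N0[of n] by (simp add: norm_c)
  then have "bounded (range c)" by (auto simp: bounded_iff)
  then obtain c0 r0 where r0: "strict_mono r0" "(c \<circ> r0) \<longlonglongrightarrow> c0"
    using bounded_imp_convergent_subsequence by blast
  ultimately obtain r1 l where r1: "strict_mono r1"
    "\<forall>e\<in>E. (\<lambda>n. (c (r0 (r1 n)) * X (r0 (r1 n)) e, c (r0 (r1 n)) * Y (r0 (r1 n)) e)) \<longlonglongrightarrow> l e"
    using finite_family_convergent_subseq[OF fin, of "\<lambda>n e. (c (r0 n) * X (r0 n) e, c (r0 n) * Y (r0 n) e)"]
    by blast
  define r where "r = r0 \<circ> r1"
  have r: "strict_mono r" unfolding r_def using r0 r1 by (simp add: strict_mono_o)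
  have c0: "(\<lambda>n. c (r n)) \<longlonglongrightarrow> c0"
    using LIMSEQ_subseq_LIMSEQ[OF r0(2) r1(1)] by (simp add: r_def o_def)
  have a: "(\<lambda>n. c (r n) * X (r n) e) \<longlonglongrightarrow> fst (l e)"
    and b: "(\<lambda>n. c (r n) * Y (r n) e) \<longlonglongrightarrow> snd (l e)" if "e \<in> E" for e
    using tendsto_fst[OF r1(2)[rule_format, OF that]] tendsto_snd[OF r1(2)[rule_format, OF that]]
    by (simp_all add: r_def)
  have "(\<lambda>n. 1 - cmod (c (r n))) \<longlonglongrightarrow> (\<Sum>e\<in>E. cmod (fst (l e)) + cmod (snd (l e)))"
    unfolding size_c[symmetric] by (intro tendsto_sum tendsto_add tendsto_norm a b)
  moreover have "(\<lambda>n. 1 - cmod (c (r n))) \<longlonglongrightarrow> 1 - cmod c0"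
    by (intro tendsto_intros c0)
  ultimately have "c0 = 0 \<Longrightarrow> (\<Sum>e\<in>E. cmod (fst (l e)) + cmod (snd (l e))) = 1"
    using LIMSEQ_unique by fastforce
  then show ?thesis
    using r c0 a b by (intro exI[of _ r] exI[of _ c] exI[of _ c0] exI[of _ "\<lambda>e. fst (l e)"]
      exI[of _ "\<lambda>e. snd (l e)"]) auto
qed

text \<open>A limit of normalised solutions is again a solution. If the normalising factors tend to
  \<open>0\<close>, its boundary data vanish, so by the lemma above so does its initial data, contradicting
  that it has size \<open>1\<close>.\<close>
lemma boundary_data_limit:
  assumes H: "compact_mgraph H" and p: "p \<in> verts H" and kk: "kk \<longlonglongrightarrow> k0"
    and kne: "\<And>n. (kk n)^2 \<noteq> k0^2" and real: "cnj (k0^2) = k0^2"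
    and data: "\<And>n. U n \<in> boundary_data H p ((kk n)^2)" and lim: "U \<longlonglongrightarrow> (x, y)"
  shows "(x, y) \<in> boundary_data H p (k0^2)"
proof -
  have "\<forall>n. \<exists>g ph D. kirchhoff_sol H p ((kk n)^2) g ph D \<and> ph p = fst (U n) \<and> out_deriv H D p = snd (U n)"
    using data unfolding boundary_data_def by fastforce
  then obtain g ph D where sol: "\<And>n. kirchhoff_sol H p ((kk n)^2) (g n) (ph n) (D n)"
    and "\<And>n. ph n p = fst (U n)" "\<And>n. out_deriv H (D n) p = snd (U n)"
    by metis
  with tendsto_fst[OF lim] tendsto_snd[OF lim]
  have x: "(\<lambda>n. ph n p) \<longlonglongrightarrow> x" and y: "(\<lambda>n. out_deriv H (D n) p) \<longlonglongrightarrow> y" by simp_all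
  have fin: "finite (edges H)" using H by (simp add: compact_mgraph_def)
  obtain r c c0 a b where r: "strict_mono r" and c0: "(\<lambda>n. c (r n)) \<longlonglongrightarrow> c0"
    and ab: "\<forall>e\<in>edges H. (\<lambda>n. c (r n) * g (r n) e 0) \<longlonglongrightarrow> a e \<and> (\<lambda>n. c (r n) * D (r n) e 0) \<longlonglongrightarrow> b e"
    and size: "c0 = 0 \<longrightarrow> (\<Sum>e\<in>edges H. cmod (a e) + cmod (b e)) = 1"
    using normalised_convergent_subseq[OF fin, where X = "\<lambda>n e. g n e 0" and Y = "\<lambda>n e. D n e 0"]
    by blast
  from ab have a: "\<And>e. e \<in> edges H \<Longrightarrow> (\<lambda>n. c (r n) * g (r n) e 0) \<longlonglongrightarrow> a e"
    and b: "\<And>e. e \<in> edges H \<Longrightarrow> (\<lambda>n. c (r n) * D (r n) e 0) \<longlonglongrightarrow> b e" by blast+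
  have sol': "kirchhoff_sol H p ((kk (r n))^2) (\<lambda>e t. c (r n) * g (r n) e t)
      (\<lambda>v. c (r n) * ph (r n) v) (\<lambda>e t. c (r n) * D (r n) e t)" for n
    by (rule kirchhoff_sol_scale[OF sol])
  have kr: "(\<lambda>n. kk (r n)) \<longlonglongrightarrow> k0" using LIMSEQ_subseq_LIMSEQ[OF kk r] by (simp add: o_def)
  have xr: "(\<lambda>n. c (r n) * ph (r n) p) \<longlonglongrightarrow> c0 * x"
    using tendsto_mult[OF c0 LIMSEQ_subseq_LIMSEQ[OF x r]] by (simp add: o_def)
  have yr: "(\<lambda>n. out_deriv H (\<lambda>e t. c (r n) * D (r n) e t) p) \<longlonglongrightarrow> c0 * y"
    using tendsto_mult[OF c0 LIMSEQ_subseq_LIMSEQ[OF y r]] by (simp add: o_def out_deriv_scale)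
  show ?thesis
  proof (cases "c0 = 0")
    case False
    obtain phi where "kirchhoff_sol H p (k0^2) (edge_sol k0 a b) phi (edge_sol_deriv k0 a b)"
      "phi p = c0 * x" "out_deriv H (edge_sol_deriv k0 a b) p = c0 * y"
      using kirchhoff_sol_limit[OF H kr sol' a b xr yr] by blast
    then have "(c0 * x, c0 * y) \<in> boundary_data H p (k0^2)" unfolding boundary_data_def by blast
    from boundary_data_scale[OF this, of "1 / c0"] show ?thesis using False by simp
  next
    case True
    then have "a e = 0 \<and> b e = 0" if "e \<in> edges H" for e
      using kirchhoff_sol_limit_vanishes[OF H p kr kne real sol' a b _ _ that] xr yr by simp
    then show ?thesis using size True by simp
  qed
qed

section \<open>Consequences of equal M-functions\<close>

lemma eventually_at_imp_sequence:
  fixes k0 :: "'a::real_normed_algebra_1"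
  assumes "eventually P (at k0)"
  shows "\<exists>kk. kk \<longlonglongrightarrow> k0 \<and> (\<forall>n. P (kk n))"
proof -
  obtain d where d: "d > 0" "\<And>x. x \<noteq> k0 \<Longrightarrow> dist x k0 < d \<Longrightarrow> P x"
    using assms unfolding eventually_at by auto
  define kk where "kk n = k0 + of_real (d / (real n + 2))" for n
  have "d / (real n + 2) < d" for n
    using d(1) by (simp add: field_simps add_pos_nonneg)
  then have "P (kk n)" for n
    using d by (intro d(2)) (auto simp: kk_def dist_norm)
  moreover have "(\<lambda>n. d / (real n + 2)) \<longlonglongrightarrow> 0" by real_asymp
  then have "kk \<longlonglongrightarrow> k0"
    unfolding kk_def using tendsto_add[OF tendsto_const tendsto_of_real] by fastforce
  ultimately show ?thesis by blast
qed

lemma sparse_avoiding_sequence: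
  fixes k0 :: complex
  assumes "S sparse_in UNIV"
  shows "\<exists>kk. kk \<longlonglongrightarrow> k0 \<and> (\<forall>n. kk n \<notin> S \<and> (kk n)^2 \<noteq> k0^2)"
proof (rule eventually_at_imp_sequence)
  have "S \<union> {- k0} sparse_in UNIV" using assms by (intro sparse_in_union') auto
  then have "eventually (\<lambda>k. k \<notin> S \<union> {- k0}) (at k0)"
    by (simp add: sparse_in_eventually_iff)
  moreover have "eventually (\<lambda>k. k \<noteq> k0) (at k0)" by (simp add: eventually_at_filter)
  ultimately show "eventually (\<lambda>k. k \<notin> S \<and> k^2 \<noteq> k0^2) (at k0)"
    by eventually_elim (auto simp: power2_eq_iff)
qed

lemma sparse_avoiding_nonreal_square:
  assumes "S sparse_in UNIV"
  shows "\<exists>k::complex. k \<notin> S \<and> Im (k^2) \<noteq> 0"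
proof -
  have "eventually (\<lambda>k. k \<notin> S) (at (1 + \<i>))"
    using assms by (simp add: sparse_in_eventually_iff)
  moreover have "((\<lambda>k::complex. Im (k^2)) \<longlongrightarrow> Im ((1 + \<i>)^2)) (at (1 + \<i>))"
    by (intro tendsto_intros)
  then have "eventually (\<lambda>k. Im (k^2) \<noteq> 0) (at (1 + \<i>))"
    by (rule tendsto_imp_eventually_ne) (simp add: power2_eq_square)
  ultimately have "eventually (\<lambda>k. k \<notin> S \<and> Im (k^2) \<noteq> 0) (at (1 + \<i>))"
    by eventually_elim simp
  then show ?thesis using eventually_happens'[OF at_neq_bot] by blast
qed

lemma M_value_boundary_data: "M_value H p k m \<Longrightarrow> (1, m) \<in> boundary_data H p (k^2)"
proof -
  assume "M_value H p k m"
  then obtain u phi D where "kirchhoff_sol H p (k^2) u phi D" "phi p \<noteq> 0" "out_deriv H D p = m * phi p"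
    unfolding M_value_def kirchhoff_sol_def by blast
  then have "(phi p, m * phi p) \<in> boundary_data H p (k^2)" "phi p \<noteq> 0"
    unfolding boundary_data_def by blast+
  from boundary_data_scale[OF this(1), of "1 / phi p"] this(2) show ?thesis by simp
qed

text \<open>The boundary data of both graphs contain \<open>(1, M(k))\<close> for \<open>k\<close> off a sparse set; rescaled to
  unit size, these have a common limit as \<open>k\<^sup>2 \<rightarrow> \<lambda>\<close>.\<close>
lemma same_M_common_boundary_data:
  assumes H1: "compact_mgraph H1" and H2: "compact_mgraph H2"
    and p1: "p1 \<in> verts H1" and p2: "p2 \<in> verts H2" and M: "same_M H1 p1 H2 p2"
  shows "\<exists>u. u \<noteq> (0, 0) \<and> u \<in> boundary_data H1 p1 (of_real lam) \<and> u \<in> boundary_data H2 p2 (of_real lam)"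
proof -
  define k0 where "k0 = csqrt (of_real lam)"
  have k0: "k0^2 = of_real lam" "cnj (k0^2) = k0^2" by (simp_all add: k0_def)
  obtain S where S: "S sparse_in UNIV"
    and SM: "\<And>k. k \<notin> S \<Longrightarrow> \<exists>m. (\<forall>m'. M_value H1 p1 k m' \<longleftrightarrow> m' = m) \<and> (\<forall>m'. M_value H2 p2 k m' \<longleftrightarrow> m' = m)"
    using M unfolding same_M_def by blast
  obtain kk where kk: "kk \<longlonglongrightarrow> k0" "\<And>n. kk n \<notin> S" "\<And>n. (kk n)^2 \<noteq> k0^2"
    using sparse_avoiding_sequence[OF S] by blast
  have "\<forall>n. \<exists>m. M_value H1 p1 (kk n) m \<and> M_value H2 p2 (kk n) m"
    using SM[OF kk(2)] by blast
  then obtain m where "\<And>n. M_value H1 p1 (kk n) (m n)" "\<And>n. M_value H2 p2 (kk n) (m n)"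
    by metis
  define s where "s n = complex_of_real (1 / (1 + cmod (m n)))" for n
  define U where "U n = (s n * 1, s n * m n)" for n
  have U1: "\<And>n. U n \<in> boundary_data H1 p1 ((kk n)^2)" and U2: "\<And>n. U n \<in> boundary_data H2 p2 ((kk n)^2)"
    unfolding U_def by (rule boundary_data_scale[OF M_value_boundary_data], fact)+
  have U_size: "cmod (fst (U n)) + cmod (snd (U n)) = 1" for n
  proof -
    have pos: "0 < 1 + cmod (m n)" by (simp add: add_pos_nonneg)
    then have "cmod (s n) = 1 / (1 + cmod (m n))" unfolding s_def norm_of_real by simp
    then show ?thesis using pos by (simp add: U_def norm_mult field_simps)
  qed
  then have "norm (U n) \<le> 1" for n using norm_Pair_le[of "fst (U n)" "snd (U n)"] by simp
  then have "bounded (range U)" by (auto simp: bounded_iff)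
  then obtain u r where r: "strict_mono r" "(U \<circ> r) \<longlonglongrightarrow> u"
    using bounded_imp_convergent_subsequence by blast
  have "(\<lambda>n. cmod (fst ((U \<circ> r) n)) + cmod (snd ((U \<circ> r) n))) \<longlonglongrightarrow> cmod (fst u) + cmod (snd u)"
    by (intro tendsto_intros r(2))
  then have "cmod (fst u) + cmod (snd u) = 1" using U_size LIMSEQ_unique[OF _ tendsto_const] by simp
  then have "u \<noteq> (0, 0)" by auto
  have kr: "(\<lambda>n. kk (r n)) \<longlonglongrightarrow> k0" using LIMSEQ_subseq_LIMSEQ[OF kk(1) r(1)] by (simp add: o_def)
  have "(fst u, snd u) \<in> boundary_data H1 p1 (k0^2)"
    by (rule boundary_data_limit[OF H1 p1 kr kk(3) k0(2), where U = "U \<circ> r"]) (use r(2) U1 in simp_all)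
  moreover have "(fst u, snd u) \<in> boundary_data H2 p2 (k0^2)"
    by (rule boundary_data_limit[OF H2 p2 kr kk(3) k0(2), where U = "U \<circ> r"]) (use r(2) U2 in simp_all)
  ultimately show ?thesis using k0(1) \<open>u \<noteq> (0, 0)\<close> by (intro exI[of _ u]) simp
qed

lemma same_M_sym: "same_M G1 p1 G2 p2 \<Longrightarrow> same_M G2 p2 G1 p1"
  unfolding same_M_def by metis

definition isolated :: "('v,'e) mgraph \<Rightarrow> 'v \<Rightarrow> bool" where
  "isolated H p \<longleftrightarrow> (\<forall>e\<in>edges H. etail H e \<noteq> p \<and> ehead H e \<noteq> p)"

lemma out_deriv_isolated:
  assumes "isolated H p"
  shows "out_deriv H D p = 0"
proof -
  have "{e \<in> edges H. etail H e = p} = {}" "{e \<in> edges H. ehead H e = p} = {}"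
    using assms by (auto simp: isolated_def)
  then show ?thesis by (simp only: out_deriv_def sum.empty diff_self)
qed

lemma kirchhoff_sol_isolated:
  "isolated H p \<Longrightarrow> kirchhoff_sol H p z (\<lambda>e x. 0) (\<lambda>v. if v = p then w else 0) (\<lambda>e x. 0)"
  by (auto simp: kirchhoff_sol_def helmholtz_def vertex_continuous_def out_deriv_def isolated_def)

text \<open>An isolated vertex has M-function \<open>0\<close>. Conversely, a solution at a non-real \<open>k\<^sup>2\<close>
  with vanishing normal derivative at \<open>p\<close> vanishes by Green's identity with its conjugate, so its
  value at a non-isolated \<open>p\<close> is \<open>0\<close>.\<close>
lemma same_M_isolated:
  assumes H2: "compact_mgraph H2" and p2: "p2 \<in> verts H2"
    and M: "same_M H1 p1 H2 p2" and iso: "isolated H1 p1"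
  shows "isolated H2 p2"
proof (rule ccontr)
  assume not_iso: "\<not> isolated H2 p2"
  obtain S where S: "S sparse_in UNIV"
    and SM: "\<And>k. k \<notin> S \<Longrightarrow> \<exists>m. (\<forall>m'. M_value H1 p1 k m' \<longleftrightarrow> m' = m) \<and> (\<forall>m'. M_value H2 p2 k m' \<longleftrightarrow> m' = m)"
    using M unfolding same_M_def by blast
  obtain k where k: "k \<notin> S" "Im (k^2) \<noteq> 0" using sparse_avoiding_nonreal_square[OF S] by blast
  have "M_value H1 p1 k 0"
    unfolding M_value_def using kirchhoff_sol_isolated[OF iso, of "k^2" 1] out_deriv_isolated[OF iso]
    unfolding kirchhoff_sol_def by fastforce
  then have "M_value H2 p2 k 0" using SM[OF k(1)] by auto
  then obtain g phi D where s: "kirchhoff_sol H2 p2 (k^2) g phi D" and "phi p2 \<noteq> 0" "out_deriv H2 D p2 = 0"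
    unfolding M_value_def kirchhoff_sol_def by auto
  moreover have "cnj (k^2) \<noteq> k^2"
  proof
    assume "cnj (k^2) = k^2"
    then have "Im (cnj (k^2)) = Im (k^2)" by (rule arg_cong)
    then show False using k(2) by (simp only: cnj.sel)
  qed
  ultimately have "(\<Sum>e\<in>edges H2. integral {0..elen H2 e} (\<lambda>x. g e x * cnj (g e x))) = 0"
    using kirchhoff_sol_green[OF H2 p2 s kirchhoff_sol_cnj[OF s]] by (simp add: out_deriv_cnj)
  moreover obtain e where e: "e \<in> edges H2" "etail H2 e = p2 \<or> ehead H2 e = p2"
    using not_iso by (auto simp: isolated_def)
  moreover have "0 < elen H2 e" using H2 e by (auto simp: compact_mgraph_def)
  moreover have "helmholtz H2 (k^2) g D" using s by (simp add: kirchhoff_sol_def)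
  ultimately have "g e 0 = 0" "g e (elen H2 e) = 0"
    using helmholtz_zero_if_norm_integral_zero[OF H2, of "k^2" g D e] by auto
  then show False
    using s e \<open>phi p2 \<noteq> 0\<close> by (auto simp: kirchhoff_sol_def vertex_continuous_def)
qed

section \<open>Gluing\<close>

definition vmap :: "('v \<Rightarrow> 'w) \<Rightarrow> ('v, 'e) mgraph \<Rightarrow> ('w, 'e) mgraph" where
  "vmap q G = \<lparr> verts = q ` verts G, edges = edges G,
     etail = q \<circ> etail G, ehead = q \<circ> ehead G, elen = elen G \<rparr>"

lemma vmap_simps [simp]:
  "verts (vmap q G) = q ` verts G" "edges (vmap q G) = edges G"
  "etail (vmap q G) = q \<circ> etail G" "ehead (vmap q G) = q \<circ> ehead G" "elen (vmap q G) = elen G"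
  by (simp_all add: vmap_def)

lemma identify_eq_vmap: "identify G x y = vmap (\<lambda>z. if z = x then y else z) G"
  by (simp add: identify_def vmap_def Let_def)

lemma vmap_vmap: "vmap q (vmap q' G) = vmap (q \<circ> q') G"
  by (simp add: vmap_def image_comp comp_assoc)

lemma dunion_simps [simp]:
  "verts (dunion G H) = Inl ` verts G \<union> Inr ` verts H"
  "edges (dunion G H) = Inl ` edges G \<union> Inr ` edges H"
  "etail (dunion G H) (Inl e) = Inl (etail G e)" "etail (dunion G H) (Inr d) = Inr (etail H d)"
  "ehead (dunion G H) (Inl e) = Inl (ehead G e)" "ehead (dunion G H) (Inr d) = Inr (ehead H d)"
  "elen (dunion G H) (Inl e) = elen G e" "elen (dunion G H) (Inr d) = elen H d"
  by (simp_all add: dunion_def)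

lemma compact_mgraph_dunion:
  "compact_mgraph G \<Longrightarrow> compact_mgraph H \<Longrightarrow> compact_mgraph (dunion G H)"
  by (auto simp: compact_mgraph_def)

lemma out_deriv_dunion:
  "out_deriv (dunion G H) D (Inl v) = out_deriv G (\<lambda>e. D (Inl e)) v"
  "out_deriv (dunion G H) D (Inr w) = out_deriv H (\<lambda>e. D (Inr e)) w"
proof -
  have "{e \<in> edges (dunion G H). etail (dunion G H) e = Inl v} = Inl ` {e \<in> edges G. etail G e = v}"
    "{e \<in> edges (dunion G H). ehead (dunion G H) e = Inl v} = Inl ` {e \<in> edges G. ehead G e = v}"
    "{e \<in> edges (dunion G H). etail (dunion G H) e = Inr w} = Inr ` {e \<in> edges H. etail H e = w}"
    "{e \<in> edges (dunion G H). ehead (dunion G H) e = Inr w} = Inr ` {e \<in> edges H. ehead H e = w}"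
    by auto
  then show "out_deriv (dunion G H) D (Inl v) = out_deriv G (\<lambda>e. D (Inl e)) v"
    "out_deriv (dunion G H) D (Inr w) = out_deriv H (\<lambda>e. D (Inr e)) w"
    unfolding out_deriv_def by (simp_all add: sum.reindex)
qed

lemma out_deriv_vmap:
  fixes G :: "('v, 'e) mgraph"
  assumes "compact_mgraph G"
  shows "out_deriv (vmap q G) D w = (\<Sum>v\<in>{v \<in> verts G. q v = w}. out_deriv G D v)"
proof -
  have fin: "finite (edges G)" "finite (verts G)" using assms by (auto simp: compact_mgraph_def)
  have group: "(\<Sum>e\<in>{e \<in> edges G. q (t e) = w}. h e)
      = (\<Sum>v\<in>{v \<in> verts G. q v = w}. \<Sum>e\<in>{e \<in> edges G. t e = v}. h e)"
    if t: "\<And>e. e \<in> edges G \<Longrightarrow> t e \<in> verts G" for t :: "'e \<Rightarrow> 'v" and h :: "'e \<Rightarrow> complex"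
  proof -
    have "(\<Sum>e\<in>{e \<in> edges G. q (t e) = w}. h e)
        = (\<Sum>v\<in>{v \<in> verts G. q v = w}. \<Sum>e\<in>{e' \<in> {e \<in> edges G. q (t e) = w}. t e' = v}. h e)"
      using fin t by (intro sum.group[symmetric]) auto
    also have "\<dots> = (\<Sum>v\<in>{v \<in> verts G. q v = w}. \<Sum>e\<in>{e \<in> edges G. t e = v}. h e)"
      by (intro sum.cong refl arg_cong2[where f = sum]) auto
    finally show ?thesis .
  qed
  show ?thesis
    using assms unfolding out_deriv_def sum_subtractf
    by (simp add: group compact_mgraph_def)
qed

definition glue_map :: "'v1 \<Rightarrow> 'v2 \<Rightarrow> 'v \<Rightarrow> 'v \<Rightarrow> 'v1 + 'v2 + 'v \<Rightarrow> 'v1 + 'v2 + 'v" where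
  "glue_map p1 p2 a b x =
     (if x = Inl p1 then Inr (Inr a) else if x = Inr (Inl p2) then Inr (Inr b) else x)"

lemma glue_map_simps [simp]:
  "glue_map p1 p2 a b (Inl x) = (if x = p1 then Inr (Inr a) else Inl x)"
  "glue_map p1 p2 a b (Inr (Inl y)) = (if y = p2 then Inr (Inr b) else Inr (Inl y))"
  "glue_map p1 p2 a b (Inr (Inr v)) = Inr (Inr v)"
  by (auto simp: glue_map_def)

text \<open>This is \<open>G\<close> of the theorem; with \<open>a\<close> and \<open>b\<close> exchanged it is \<open>G'\<close>.\<close>
definition glued :: "('v1, 'e1) mgraph \<Rightarrow> ('v2, 'e2) mgraph \<Rightarrow> ('v, 'e) mgraph \<Rightarrow>
    'v1 \<Rightarrow> 'v2 \<Rightarrow> 'v \<Rightarrow> 'v \<Rightarrow> ('v1 + 'v2 + 'v, 'e1 + 'e2 + 'e) mgraph" where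
  "glued G1 G2 G0 p1 p2 a b = vmap (glue_map p1 p2 a b) (dunion G1 (dunion G2 G0))"

lemma identify_identify_eq_glued:
  "identify (identify (dunion G1 (dunion G2 G0)) (Inl p1) (Inr (Inr a))) (Inr (Inl p2)) (Inr (Inr b))
     = glued G1 G2 G0 p1 p2 a b"
  "identify (identify (dunion G1 (dunion G2 G0)) (Inr (Inl p2)) (Inr (Inr a))) (Inl p1) (Inr (Inr b))
     = glued G1 G2 G0 p1 p2 b a"
  unfolding glued_def identify_eq_vmap vmap_vmap
  by (auto intro!: arg_cong2[where f = vmap] simp: glue_map_def)

definition std_sol :: "('w, 'd) mgraph \<Rightarrow> complex \<Rightarrow> ('d \<Rightarrow> real \<Rightarrow> complex) \<Rightarrow> bool" where
  "std_sol G z F \<longleftrightarrow> (\<exists>phi D. helmholtz G z F D \<and> vertex_continuous G F phi \<and>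
     (\<forall>v\<in>verts G. out_deriv G D v = 0))"

definition vanishes_off :: "('w, 'd) mgraph \<Rightarrow> ('d \<Rightarrow> real \<Rightarrow> complex) \<Rightarrow> bool" where
  "vanishes_off G F \<longleftrightarrow> (\<forall>e. e \<notin> edges G \<longrightarrow> (\<forall>x. F e x = 0)) \<and>
     (\<forall>e\<in>edges G. \<forall>x. x \<notin> {0..elen G e} \<longrightarrow> F e x = 0)"

lemma std_eigenfun_iff: "std_eigenfun G lam F \<longleftrightarrow> vanishes_off G F \<and> std_sol G (of_real lam) F"
  unfolding std_eigenfun_def vanishes_off_def std_sol_def by blast

definition glued_parts :: "('v1, 'e1) mgraph \<Rightarrow> ('v2, 'e2) mgraph \<Rightarrow> ('v, 'e) mgraph \<Rightarrow>
    'v1 \<Rightarrow> 'v2 \<Rightarrow> 'v \<Rightarrow> 'v \<Rightarrow> complex \<Rightarrow> ('e1 + 'e2 + 'e \<Rightarrow> real \<Rightarrow> complex) \<Rightarrow> bool" where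
  "glued_parts G1 G2 G0 p1 p2 a b z F \<longleftrightarrow> (\<exists>phi1 phi2 phi0 D1 D2 D0.
     kirchhoff_sol G1 p1 z (\<lambda>e. F (Inl e)) phi1 D1 \<and>
     kirchhoff_sol G2 p2 z (\<lambda>e. F (Inr (Inl e))) phi2 D2 \<and>
     helmholtz G0 z (\<lambda>e. F (Inr (Inr e))) D0 \<and> vertex_continuous G0 (\<lambda>e. F (Inr (Inr e))) phi0 \<and>
     (\<forall>v\<in>verts G0 - {a, b}. out_deriv G0 D0 v = 0) \<and>
     phi1 p1 = phi0 a \<and> phi2 p2 = phi0 b \<and>
     out_deriv G0 D0 a + out_deriv G1 D1 p1 = 0 \<and> out_deriv G0 D0 b + out_deriv G2 D2 p2 = 0)"

lemma glued_simps [simp]: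
  "verts (glued G1 G2 G0 p1 p2 a b) =
     glue_map p1 p2 a b ` (Inl ` verts G1 \<union> Inr ` (Inl ` verts G2 \<union> Inr ` verts G0))"
  "edges (glued G1 G2 G0 p1 p2 a b) = Inl ` edges G1 \<union> Inr ` (Inl ` edges G2 \<union> Inr ` edges G0)"
  "etail (glued G1 G2 G0 p1 p2 a b) = glue_map p1 p2 a b \<circ> etail (dunion G1 (dunion G2 G0))"
  "ehead (glued G1 G2 G0 p1 p2 a b) = glue_map p1 p2 a b \<circ> ehead (dunion G1 (dunion G2 G0))"
  "elen (glued G1 G2 G0 p1 p2 a b) = elen (dunion G1 (dunion G2 G0))"
  by (simp_all add: glued_def)

lemma helmholtz_glued_parts:
  assumes "helmholtz (glued G1 G2 G0 p1 p2 a b) z F D"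
  shows "helmholtz G1 z (\<lambda>e. F (Inl e)) (\<lambda>e. D (Inl e))"
    and "helmholtz G2 z (\<lambda>e. F (Inr (Inl e))) (\<lambda>e. D (Inr (Inl e)))"
    and "helmholtz G0 z (\<lambda>e. F (Inr (Inr e))) (\<lambda>e. D (Inr (Inr e)))"
  using assms unfolding helmholtz_def by force+

context
  fixes G1 :: "('v1, 'e1) mgraph" and G2 :: "('v2, 'e2) mgraph" and G0 :: "('v, 'e) mgraph"
    and p1 :: 'v1 and p2 :: 'v2 and a b :: 'v
  assumes G1: "compact_mgraph G1" and G2: "compact_mgraph G2" and G0: "compact_mgraph G0"
    and p1: "p1 \<in> verts G1" and p2: "p2 \<in> verts G2"
    and a: "a \<in> verts G0" and b: "b \<in> verts G0" and ab: "a \<noteq> b"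
begin

lemma out_deriv_glued_preimage:
  "out_deriv (glued G1 G2 G0 p1 p2 a b) D w =
     (\<Sum>v\<in>{v \<in> verts (dunion G1 (dunion G2 G0)). glue_map p1 p2 a b v = w}.
        out_deriv (dunion G1 (dunion G2 G0)) D v)"
  unfolding glued_def using G1 G2 G0 by (intro out_deriv_vmap compact_mgraph_dunion)

lemma out_deriv_glued:
  shows "out_deriv (glued G1 G2 G0 p1 p2 a b) D (Inr (Inr a)) =
      out_deriv G1 (\<lambda>e. D (Inl e)) p1 + out_deriv G0 (\<lambda>e. D (Inr (Inr e))) a"
    and "out_deriv (glued G1 G2 G0 p1 p2 a b) D (Inr (Inr b)) =
      out_deriv G2 (\<lambda>e. D (Inr (Inl e))) p2 + out_deriv G0 (\<lambda>e. D (Inr (Inr e))) b"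
    and "v \<in> verts G0 \<Longrightarrow> v \<noteq> a \<Longrightarrow> v \<noteq> b \<Longrightarrow>
      out_deriv (glued G1 G2 G0 p1 p2 a b) D (Inr (Inr v)) = out_deriv G0 (\<lambda>e. D (Inr (Inr e))) v"
    and "u \<in> verts G1 \<Longrightarrow> u \<noteq> p1 \<Longrightarrow>
      out_deriv (glued G1 G2 G0 p1 p2 a b) D (Inl u) = out_deriv G1 (\<lambda>e. D (Inl e)) u"
    and "u' \<in> verts G2 \<Longrightarrow> u' \<noteq> p2 \<Longrightarrow>
      out_deriv (glued G1 G2 G0 p1 p2 a b) D (Inr (Inl u')) = out_deriv G2 (\<lambda>e. D (Inr (Inl e))) u'"
proof -
  let ?U = "dunion G1 (dunion G2 G0)" and ?q = "glue_map p1 p2 a b"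
  have "{v \<in> verts ?U. ?q v = Inr (Inr a)} = {Inl p1, Inr (Inr a)}"
    "{v \<in> verts ?U. ?q v = Inr (Inr b)} = {Inr (Inl p2), Inr (Inr b)}"
    using p1 p2 a b ab by (auto split: if_splits)
  then show "out_deriv (glued G1 G2 G0 p1 p2 a b) D (Inr (Inr a)) =
      out_deriv G1 (\<lambda>e. D (Inl e)) p1 + out_deriv G0 (\<lambda>e. D (Inr (Inr e))) a"
    "out_deriv (glued G1 G2 G0 p1 p2 a b) D (Inr (Inr b)) =
      out_deriv G2 (\<lambda>e. D (Inr (Inl e))) p2 + out_deriv G0 (\<lambda>e. D (Inr (Inr e))) b"
    unfolding out_deriv_glued_preimage by (simp_all add: out_deriv_dunion)
  show "out_deriv (glued G1 G2 G0 p1 p2 a b) D (Inr (Inr v)) = out_deriv G0 (\<lambda>e. D (Inr (Inr e))) v"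
    if "v \<in> verts G0" "v \<noteq> a" "v \<noteq> b"
  proof -
    have "{w \<in> verts ?U. ?q w = Inr (Inr v)} = {Inr (Inr v)}" using that by (auto split: if_splits)
    then show ?thesis unfolding out_deriv_glued_preimage by (simp add: out_deriv_dunion)
  qed
  show "out_deriv (glued G1 G2 G0 p1 p2 a b) D (Inl u) = out_deriv G1 (\<lambda>e. D (Inl e)) u"
    if "u \<in> verts G1" "u \<noteq> p1"
  proof -
    have "{w \<in> verts ?U. ?q w = Inl u} = {Inl u}" using that by (auto split: if_splits)
    then show ?thesis unfolding out_deriv_glued_preimage by (simp add: out_deriv_dunion)
  qed
  show "out_deriv (glued G1 G2 G0 p1 p2 a b) D (Inr (Inl u')) = out_deriv G2 (\<lambda>e. D (Inr (Inl e))) u'"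
    if "u' \<in> verts G2" "u' \<noteq> p2"
  proof -
    have "{w \<in> verts ?U. ?q w = Inr (Inl u')} = {Inr (Inl u')}" using that by (auto split: if_splits)
    then show ?thesis unfolding out_deriv_glued_preimage by (simp add: out_deriv_dunion)
  qed
qed

lemma std_sol_glued_imp_parts:
  assumes "std_sol (glued G1 G2 G0 p1 p2 a b) z F"
  shows "glued_parts G1 G2 G0 p1 p2 a b z F"
proof -
  let ?G = "glued G1 G2 G0 p1 p2 a b" and ?q = "glue_map p1 p2 a b"
  obtain phi D where h: "helmholtz ?G z F D" and vc: "vertex_continuous ?G F phi"
    and k: "\<forall>v\<in>verts ?G. out_deriv ?G D v = 0"
    using assms unfolding std_sol_def by blast
  have in_G: "Inl u \<in> verts ?G" if "u \<in> verts G1" "u \<noteq> p1" for u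
    using that by (auto intro!: image_eqI[of _ _ "Inl u"])
  have "kirchhoff_sol G1 p1 z (\<lambda>e. F (Inl e)) (\<lambda>u. phi (?q (Inl u))) (\<lambda>e. D (Inl e))"
    unfolding kirchhoff_sol_def
  proof (intro conjI ballI)
    show "helmholtz G1 z (\<lambda>e. F (Inl e)) (\<lambda>e. D (Inl e))" by (rule helmholtz_glued_parts(1)[OF h])
    show "vertex_continuous G1 (\<lambda>e. F (Inl e)) (\<lambda>u. phi (?q (Inl u)))"
      using vc unfolding vertex_continuous_def by force
    fix u assume "u \<in> verts G1 - {p1}"
    then show "out_deriv G1 (\<lambda>e. D (Inl e)) u = 0"
      using bspec[OF k in_G] out_deriv_glued(4)[of u D] by simp
  qed
  moreover have in_G: "Inr (Inl u) \<in> verts ?G" if "u \<in> verts G2" "u \<noteq> p2" for u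
    using that by (auto intro!: image_eqI[of _ _ "Inr (Inl u)"])
  have "kirchhoff_sol G2 p2 z (\<lambda>e. F (Inr (Inl e))) (\<lambda>u. phi (?q (Inr (Inl u)))) (\<lambda>e. D (Inr (Inl e)))"
    unfolding kirchhoff_sol_def
  proof (intro conjI ballI)
    show "helmholtz G2 z (\<lambda>e. F (Inr (Inl e))) (\<lambda>e. D (Inr (Inl e)))"
      by (rule helmholtz_glued_parts(2)[OF h])
    show "vertex_continuous G2 (\<lambda>e. F (Inr (Inl e))) (\<lambda>u. phi (?q (Inr (Inl u))))"
      using vc unfolding vertex_continuous_def by force
    fix u assume "u \<in> verts G2 - {p2}"
    then show "out_deriv G2 (\<lambda>e. D (Inr (Inl e))) u = 0"
      using bspec[OF k in_G] out_deriv_glued(5)[of u D] by simp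
  qed
  moreover have "vertex_continuous G0 (\<lambda>e. F (Inr (Inr e))) (\<lambda>v. phi (Inr (Inr v)))"
    using vc unfolding vertex_continuous_def by force
  moreover have in_G: "Inr (Inr v) \<in> verts ?G" if "v \<in> verts G0" for v
    using that by (auto intro!: image_eqI[of _ _ "Inr (Inr v)"])
  then have "\<forall>v\<in>verts G0 - {a, b}. out_deriv G0 (\<lambda>e. D (Inr (Inr e))) v = 0"
    using bspec[OF k] out_deriv_glued(3)[of _ D] by simp
  moreover have "out_deriv ?G D (Inr (Inr a)) = 0" "out_deriv ?G D (Inr (Inr b)) = 0"
    using bspec[OF k in_G[OF a]] bspec[OF k in_G[OF b]] by simp_all
  then have "out_deriv G0 (\<lambda>e. D (Inr (Inr e))) a + out_deriv G1 (\<lambda>e. D (Inl e)) p1 = 0"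
    "out_deriv G0 (\<lambda>e. D (Inr (Inr e))) b + out_deriv G2 (\<lambda>e. D (Inr (Inl e))) p2 = 0"
    using out_deriv_glued(1,2)[of D] by (simp_all add: add.commute)
  ultimately show ?thesis
    unfolding glued_parts_def using helmholtz_glued_parts(3)[OF h]
    by (intro exI[of _ "\<lambda>u. phi (?q (Inl u))"] exI[of _ "\<lambda>u. phi (?q (Inr (Inl u)))"]
        exI[of _ "\<lambda>v. phi (Inr (Inr v))"] exI[of _ "\<lambda>e. D (Inl e)"] exI[of _ "\<lambda>e. D (Inr (Inl e))"]
        exI[of _ "\<lambda>e. D (Inr (Inr e))"] conjI) simp_all
qed

lemma glued_parts_imp_std_sol:
  assumes "glued_parts G1 G2 G0 p1 p2 a b z F"
  shows "std_sol (glued G1 G2 G0 p1 p2 a b) z F"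
proof -
  let ?G = "glued G1 G2 G0 p1 p2 a b"
  obtain phi1 phi2 phi0 D1 D2 D0 where
    s1: "kirchhoff_sol G1 p1 z (\<lambda>e. F (Inl e)) phi1 D1"
    and s2: "kirchhoff_sol G2 p2 z (\<lambda>e. F (Inr (Inl e))) phi2 D2"
    and h0: "helmholtz G0 z (\<lambda>e. F (Inr (Inr e))) D0"
    and v0: "vertex_continuous G0 (\<lambda>e. F (Inr (Inr e))) phi0"
    and k0: "\<forall>v\<in>verts G0 - {a, b}. out_deriv G0 D0 v = 0"
    and pa: "phi1 p1 = phi0 a" and pb: "phi2 p2 = phi0 b"
    and ka: "out_deriv G0 D0 a + out_deriv G1 D1 p1 = 0"
    and kb: "out_deriv G0 D0 b + out_deriv G2 D2 p2 = 0"
    using assms unfolding glued_parts_def by blast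
  define D where "D = case_sum D1 (case_sum D2 D0)"
  have D: "(\<lambda>e. D (Inl e)) = D1" "(\<lambda>e. D (Inr (Inl e))) = D2" "(\<lambda>e. D (Inr (Inr e))) = D0"
    by (auto simp: D_def)
  have "helmholtz ?G z F D"
    using s1 s2 h0 unfolding helmholtz_def kirchhoff_sol_def by (auto simp: D_def)
  moreover have "vertex_continuous ?G F (case_sum phi1 (case_sum phi2 phi0))"
    using s1 s2 v0 pa pb unfolding vertex_continuous_def kirchhoff_sol_def by auto
  moreover have "out_deriv ?G D w = 0" if "w \<in> verts ?G" for w
  proof -
    from that have "w \<in> glue_map p1 p2 a b ` (Inl ` verts G1 \<union> Inr ` (Inl ` verts G2 \<union> Inr ` verts G0))"
      by simp
    then obtain x where x: "x \<in> Inl ` verts G1 \<union> Inr ` (Inl ` verts G2 \<union> Inr ` verts G0)"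
      and w: "w = glue_map p1 p2 a b x" by (rule imageE)
    from x show ?thesis
    proof (elim UnE imageE)
      fix u assume "u \<in> verts G1" "x = Inl u"
      then show ?thesis using w s1 out_deriv_glued(4)[of u D] out_deriv_glued(1)[of D] ka D
        by (cases "u = p1") (auto simp: kirchhoff_sol_def add.commute)
    next
      fix y u assume "u \<in> verts G2" "y = Inl u" "x = Inr y"
      then show ?thesis using w s2 out_deriv_glued(5)[of u D] out_deriv_glued(2)[of D] kb D
        by (cases "u = p2") (auto simp: kirchhoff_sol_def add.commute)
    next
      fix y v assume "v \<in> verts G0" "y = Inr v" "x = Inr y"
      then show ?thesis using w k0 out_deriv_glued(1,2)[of D] out_deriv_glued(3)[of v D] ka kb D
        by (cases "v = a"; cases "v = b") (auto simp: add.commute)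
    qed
  qed
  ultimately show ?thesis unfolding std_sol_def by blast
qed

end

section \<open>Boundary coordinates\<close>

text \<open>The data of a solution at \<open>p\<close>, read off from the function alone (the value along some
  incident edge, and the outward derivative built from the derivatives along the edges), so that
  they depend linearly on it.\<close>
definition vertex_value :: "('v, 'e) mgraph \<Rightarrow> 'v \<Rightarrow> ('e \<Rightarrow> real \<Rightarrow> complex) \<Rightarrow> complex" where
  "vertex_value H p f =
     (if \<exists>e\<in>edges H. etail H e = p then f (SOME e. e \<in> edges H \<and> etail H e = p) 0
      else if \<exists>e\<in>edges H. ehead H e = p
      then f (SOME e. e \<in> edges H \<and> ehead H e = p) (elen H (SOME e. e \<in> edges H \<and> ehead H e = p))
      else 0)"

definition boundary_flux :: "('v, 'e) mgraph \<Rightarrow> 'v \<Rightarrow> ('e \<Rightarrow> real \<Rightarrow> complex) \<Rightarrow> complex" where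
  "boundary_flux H p f = out_deriv H (\<lambda>e x. vector_derivative (f e) (at x within {0..elen H e})) p"

lemma boundary_flux_eq:
  assumes H: "compact_mgraph H" and h: "helmholtz H z f D"
  shows "boundary_flux H p f = out_deriv H D p"
  unfolding boundary_flux_def
proof (rule out_deriv_cong)
  fix e assume e: "e \<in> edges H"
  then have L: "0 < elen H e" using H by (auto simp: compact_mgraph_def)
  have "vector_derivative (f e) (at x within {0..elen H e}) = D e x" if "x \<in> {0..elen H e}" for x
  proof -
    have "(f e has_vector_derivative D e x) (at x within cbox 0 (elen H e))"
      using h e that by (auto simp: helmholtz_def)
    then show ?thesis using vector_derivative_within_cbox[OF L] that by auto
  qed
  then show "vector_derivative (f e) (at 0 within {0..elen H e}) = D e 0 \<and>
      vector_derivative (f e) (at (elen H e) within {0..elen H e}) = D e (elen H e)"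
    using L by auto
qed

lemma boundary_flux_lincomb:
  assumes H: "compact_mgraph H" and h: "\<And>i. i < n \<Longrightarrow> helmholtz H z (f i) (D i)"
  shows "boundary_flux H p (\<lambda>e x. \<Sum>i<n. c i * f i e x) = (\<Sum>i<n. c i * boundary_flux H p (f i))"
  using boundary_flux_eq[OF H helmholtz_lincomb[OF h]] boundary_flux_eq[OF H h]
  by (simp add: out_deriv_lincomb)

lemma vertex_value_eq:
  assumes vc: "vertex_continuous H f phi" and not_iso: "\<not> isolated H p"
  shows "vertex_value H p f = phi p"
proof (cases "\<exists>e\<in>edges H. etail H e = p")
  case True
  then have "(SOME e. e \<in> edges H \<and> etail H e = p) \<in> edges H \<and>
      etail H (SOME e. e \<in> edges H \<and> etail H e = p) = p"
    by (metis (mono_tags, lifting) someI_ex)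
  then show ?thesis using True vc by (auto simp: vertex_value_def vertex_continuous_def)
next
  case False
  then have ex: "\<exists>e\<in>edges H. ehead H e = p" using not_iso by (auto simp: isolated_def)
  then have "(SOME e. e \<in> edges H \<and> ehead H e = p) \<in> edges H \<and>
      ehead H (SOME e. e \<in> edges H \<and> ehead H e = p) = p"
    by (metis (mono_tags, lifting) someI_ex)
  then show ?thesis using ex False vc by (auto simp: vertex_value_def vertex_continuous_def)
qed

lemma vertex_value_isolated: "isolated H p \<Longrightarrow> vertex_value H p f = 0"
  by (auto simp: vertex_value_def isolated_def)

lemma vertex_value_lincomb:
  "vertex_value H p (\<lambda>e x. \<Sum>i<n. c i * f i e x) = (\<Sum>i<n. c i * vertex_value H p (f i))"
  by (auto simp: vertex_value_def)

definition line_coord :: "complex \<times> complex \<Rightarrow> complex \<Rightarrow> complex \<Rightarrow> complex" where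
  "line_coord u x y = (if snd u \<noteq> 0 then y / snd u else x / fst u)"

lemma line_coord_scale: "u \<noteq> (0, 0) \<Longrightarrow> line_coord u (c * fst u) (c * snd u) = c"
  by (cases u) (auto simp: line_coord_def)

lemma line_coord_lincomb:
  "line_coord u (\<Sum>i<n. c i * x i) (\<Sum>i<n. c i * y i) = (\<Sum>i<n. c i * line_coord u (x i) (y i))"
  by (auto simp: line_coord_def sum_divide_distrib)

lemma line_coord_cancel:
  "u \<noteq> (0, 0) \<Longrightarrow> x * fst u = y * fst u \<Longrightarrow> x * snd u = y * snd u \<Longrightarrow> (x::complex) = y"
  by (cases u) auto

definition boundary_coord :: "('v, 'e) mgraph \<Rightarrow> 'v \<Rightarrow> complex \<times> complex \<Rightarrow>
    ('e \<Rightarrow> real \<Rightarrow> complex) \<Rightarrow> complex" where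
  "boundary_coord H p u f = line_coord u (vertex_value H p f) (boundary_flux H p f)"

lemma boundary_coord_lincomb:
  assumes "compact_mgraph H" "\<And>i. i < n \<Longrightarrow> helmholtz H z (f i) (D i)"
  shows "boundary_coord H p u (\<lambda>e x. \<Sum>i<n. c i * f i e x) = (\<Sum>i<n. c i * boundary_coord H p u (f i))"
  by (simp add: boundary_coord_def vertex_value_lincomb boundary_flux_lincomb[OF assms]
      line_coord_lincomb)

lemma boundary_coord_zero:
  assumes "compact_mgraph H"
  shows "boundary_coord H p u (\<lambda>e x. 0) = 0"
proof -
  have "helmholtz H 0 (\<lambda>e x. 0) (\<lambda>e x. 0)" by (simp add: helmholtz_def)
  from boundary_flux_eq[OF assms this] show ?thesis
    by (simp add: boundary_coord_def line_coord_def vertex_value_def out_deriv_def)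
qed

lemma boundary_coord_data:
  assumes H: "compact_mgraph H" and p: "p \<in> verts H"
    and u: "u \<noteq> (0, 0)" "u \<in> boundary_data H p (of_real lam)"
    and f: "kirchhoff_sol H p (of_real lam) f phi D"
  shows "out_deriv H D p = boundary_coord H p u f * snd u"
    and "\<not> isolated H p \<Longrightarrow> phi p = boundary_coord H p u f * fst u"
proof -
  have "(phi p, out_deriv H D p) \<in> boundary_data H p (of_real lam)"
    using f unfolding boundary_data_def by blast
  then obtain c where c: "phi p = c * fst u" "out_deriv H D p = c * snd u"
    using boundary_data_collinear[OF H p u] by blast
  have flux: "boundary_flux H p f = out_deriv H D p"
    using boundary_flux_eq[OF H] f by (auto simp: kirchhoff_sol_def)
  have coord: "boundary_coord H p u f = c" if "\<not> isolated H p"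
  proof -
    have "vertex_value H p f = phi p"
      using f vertex_value_eq[OF _ that] by (simp add: kirchhoff_sol_def)
    then show ?thesis using c flux line_coord_scale[OF u(1)] by (simp add: boundary_coord_def)
  qed
  show "phi p = boundary_coord H p u f * fst u" if "\<not> isolated H p"
    using c coord[OF that] by simp
  show "out_deriv H D p = boundary_coord H p u f * snd u"
  proof (cases "isolated H p")
    case True
    then show ?thesis
      using flux by (simp add: boundary_coord_def line_coord_def out_deriv_isolated vertex_value_isolated)
  qed (use c coord in simp)
qed

lemma kirchhoff_sol_shift_coord:
  fixes \<beta> :: complex
  assumes H: "compact_mgraph H" and p: "p \<in> verts H"
    and u: "u \<noteq> (0, 0)" "u \<in> boundary_data H p (of_real lam)"
    and f: "kirchhoff_sol H p (of_real lam) f phi D"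
    and s: "kirchhoff_sol H p (of_real lam) s psi E" "psi p = fst u" "out_deriv H E p = snd u"
    and w: "\<not> isolated H p \<Longrightarrow> w = \<beta> * fst u"
  defines "c \<equiv> \<beta> - boundary_coord H p u f"
  shows "kirchhoff_sol H p (of_real lam) (\<lambda>e x. f e x + c * s e x)
           ((\<lambda>v. phi v + c * psi v)(p := w)) (\<lambda>e x. D e x + c * E e x)"
    and "out_deriv H (\<lambda>e x. D e x + c * E e x) p = \<beta> * snd u"
    and "\<not> isolated H p \<Longrightarrow> boundary_coord H p u (\<lambda>e x. f e x + c * s e x) = \<beta>"
proof -
  note coord = boundary_coord_data[OF H p u f]
  have sum: "kirchhoff_sol H p (of_real lam) (\<lambda>e x. f e x + c * s e x) (\<lambda>v. phi v + c * psi v)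
      (\<lambda>e x. D e x + c * E e x)"
    by (rule kirchhoff_sol_add_scale[OF f s(1)])
  have at_p: "phi p + c * psi p = w" if "\<not> isolated H p"
    using coord(2)[OF that] s(2) w[OF that] by (simp add: c_def algebra_simps)
  show sol: "kirchhoff_sol H p (of_real lam) (\<lambda>e x. f e x + c * s e x)
      ((\<lambda>v. phi v + c * psi v)(p := w)) (\<lambda>e x. D e x + c * E e x)"
  proof (rule kirchhoff_sol_reset_value[OF sum])
    fix e assume e: "e \<in> edges H"
    have ends: "f e 0 + c * s e 0 = phi (etail H e) + c * psi (etail H e)"
      "f e (elen H e) + c * s e (elen H e) = phi (ehead H e) + c * psi (ehead H e)"
      using sum e by (simp_all add: kirchhoff_sol_def vertex_continuous_def)
    show "f e 0 + c * s e 0 = w" if "etail H e = p"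
      using e that ends(1) at_p by (auto simp: isolated_def)
    show "f e (elen H e) + c * s e (elen H e) = w" if "ehead H e = p"
      using e that ends(2) at_p by (auto simp: isolated_def)
  qed
  show out: "out_deriv H (\<lambda>e x. D e x + c * E e x) p = \<beta> * snd u"
    unfolding out_deriv_add_scale coord(1) s(3) by (simp add: c_def algebra_simps)
  show "boundary_coord H p u (\<lambda>e x. f e x + c * s e x) = \<beta>" if "\<not> isolated H p"
  proof (rule line_coord_cancel[OF u(1)])
    show "boundary_coord H p u (\<lambda>e x. f e x + c * s e x) * fst u = \<beta> * fst u"
      using boundary_coord_data(2)[OF H p u sol that] w[OF that] by (metis fun_upd_same)
    show "boundary_coord H p u (\<lambda>e x. f e x + c * s e x) * snd u = \<beta> * snd u"
      using boundary_coord_data(1)[OF H p u sol] out by metis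
  qed
qed

lemma exists_boundary_sol:
  assumes H: "compact_mgraph H" and p: "p \<in> verts H"
    and u: "u \<noteq> (0, 0)" "u \<in> boundary_data H p (of_real lam)"
  shows "\<exists>s. (\<exists>psi E. kirchhoff_sol H p (of_real lam) s psi E \<and> psi p = fst u \<and> out_deriv H E p = snd u)
           \<and> vanishes_off H s \<and> (isolated H p \<longrightarrow> (\<forall>e x. s e x = 0))"
proof (cases "isolated H p")
  case True
  note zero_sol = kirchhoff_sol_isolated[OF True]
  have "(1, 0) \<in> boundary_data H p (of_real lam)"
    unfolding boundary_data_def using zero_sol[of _ 1] out_deriv_isolated[OF True] by force
  then obtain c where "1 = c * fst u" "0 = c * snd u"
    using boundary_data_collinear[OF H p u] by blast
  then have "snd u = 0" by auto
  then show ?thesis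
    using zero_sol[of _ "fst u"] out_deriv_isolated[OF True] by (force simp: vanishes_off_def)
next
  case False
  obtain f psi E where f: "kirchhoff_sol H p (of_real lam) f psi E" "psi p = fst u" "out_deriv H E p = snd u"
    using u(2) unfolding boundary_data_def by (cases u) auto
  define s where "s e x = (if e \<in> edges H \<and> x \<in> {0..elen H e} then f e x else 0)" for e x
  have "kirchhoff_sol H p (of_real lam) s psi E"
    using kirchhoff_sol_cong[OF H f(1)] by (simp add: s_def)
  moreover have "vanishes_off H s" by (simp add: vanishes_off_def s_def)
  ultimately show ?thesis using f(2,3) False by blast
qed

section \<open>Transplantation\<close>

text \<open>At an isolated \<open>p\<^sub>i\<close> the boundary coordinate carries no information, so there \<open>s\<^sub>i\<close> is
  taken to be \<open>0\<close> and the transplantation is the identity.\<close>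
locale transplant_setting =
  fixes G1 :: "('v1, 'e1) mgraph" and G2 :: "('v2, 'e2) mgraph"
    and p1 :: 'v1 and p2 :: 'v2 and lam :: real and u :: "complex \<times> complex"
    and s1 :: "'e1 \<Rightarrow> real \<Rightarrow> complex" and s2 :: "'e2 \<Rightarrow> real \<Rightarrow> complex"
  assumes G1: "compact_mgraph G1" and G2: "compact_mgraph G2"
    and p1: "p1 \<in> verts G1" and p2: "p2 \<in> verts G2"
    and u: "u \<noteq> (0, 0)"
    and u1: "u \<in> boundary_data G1 p1 (of_real lam)" and u2: "u \<in> boundary_data G2 p2 (of_real lam)"
    and isolated_iff: "isolated G1 p1 \<longleftrightarrow> isolated G2 p2"
    and s1: "\<exists>psi E. kirchhoff_sol G1 p1 (of_real lam) s1 psi E \<and> psi p1 = fst u \<and> out_deriv G1 E p1 = snd u"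
    and s2: "\<exists>psi E. kirchhoff_sol G2 p2 (of_real lam) s2 psi E \<and> psi p2 = fst u \<and> out_deriv G2 E p2 = snd u"
    and s1_vanishes: "vanishes_off G1 s1" and s2_vanishes: "vanishes_off G2 s2"
    and s1_isolated: "isolated G1 p1 \<Longrightarrow> \<forall>e x. s1 e x = 0"
    and s2_isolated: "isolated G2 p2 \<Longrightarrow> \<forall>e x. s2 e x = 0"
begin

definition coord1 :: "('e1 + 'e2 + 'e \<Rightarrow> real \<Rightarrow> complex) \<Rightarrow> complex" where
  "coord1 F = boundary_coord G1 p1 u (\<lambda>e. F (Inl e))"

definition coord2 :: "('e1 + 'e2 + 'e \<Rightarrow> real \<Rightarrow> complex) \<Rightarrow> complex" where
  "coord2 F = boundary_coord G2 p2 u (\<lambda>e. F (Inr (Inl e)))"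

text \<open>The transplantation: \<open>F + (\<beta> - \<alpha>) (s\<^sub>1 \<oplus> -s\<^sub>2 \<oplus> 0)\<close> exchanges the boundary coordinates
  \<open>\<alpha>\<close>, \<open>\<beta>\<close> of \<open>F\<close> at \<open>p\<^sub>1\<close> and \<open>p\<^sub>2\<close>.\<close>
definition transplant :: "('e1 + 'e2 + 'e \<Rightarrow> real \<Rightarrow> complex) \<Rightarrow> 'e1 + 'e2 + 'e \<Rightarrow> real \<Rightarrow> complex" where
  "transplant F = (\<lambda>E x. F E x +
     (coord2 F - coord1 F) * case_sum s1 (case_sum (\<lambda>e x. - s2 e x) (\<lambda>e x. 0)) E x)"

lemma transplant_simps:
  "transplant F (Inl e) x = F (Inl e) x + (coord2 F - coord1 F) * s1 e x"
  "transplant F (Inr (Inl e')) x = F (Inr (Inl e')) x + (coord1 F - coord2 F) * s2 e' x"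
  "transplant F (Inr (Inr e'')) = F (Inr (Inr e''))"
  by (auto simp: transplant_def algebra_simps)

lemma transplant_parts:
  assumes F: "glued_parts G1 G2 G0 p1 p2 a b (of_real lam) F"
  shows "glued_parts G1 G2 G0 p1 p2 b a (of_real lam) (transplant F)"
    and "\<not> isolated G1 p1 \<Longrightarrow> coord1 (transplant F) = coord2 F \<and> coord2 (transplant F) = coord1 F"
proof -
  let ?z = "complex_of_real lam"
  obtain phi1 phi2 phi0 D1 D2 D0 where
    F1: "kirchhoff_sol G1 p1 ?z (\<lambda>e. F (Inl e)) phi1 D1"
    and F2: "kirchhoff_sol G2 p2 ?z (\<lambda>e. F (Inr (Inl e))) phi2 D2"
    and F0: "helmholtz G0 ?z (\<lambda>e. F (Inr (Inr e))) D0" "vertex_continuous G0 (\<lambda>e. F (Inr (Inr e))) phi0"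
      "\<forall>v\<in>verts G0 - {a, b}. out_deriv G0 D0 v = 0"
    and pa: "phi1 p1 = phi0 a" and pb: "phi2 p2 = phi0 b"
    and ka: "out_deriv G0 D0 a + out_deriv G1 D1 p1 = 0"
    and kb: "out_deriv G0 D0 b + out_deriv G2 D2 p2 = 0"
    using F unfolding glued_parts_def by blast
  obtain psi1 E1 where S1: "kirchhoff_sol G1 p1 ?z s1 psi1 E1" "psi1 p1 = fst u" "out_deriv G1 E1 p1 = snd u"
    using s1 by blast
  obtain psi2 E2 where S2: "kirchhoff_sol G2 p2 ?z s2 psi2 E2" "psi2 p2 = fst u" "out_deriv G2 E2 p2 = snd u"
    using s2 by blast
  note data1 = boundary_coord_data[OF G1 p1 u u1 F1, folded coord1_def]
  note data2 = boundary_coord_data[OF G2 p2 u u2 F2, folded coord2_def]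
  have "phi0 b = coord2 F * fst u" if "\<not> isolated G1 p1"
    using data2(2) that isolated_iff pb by simp
  note shift1 = kirchhoff_sol_shift_coord[OF G1 p1 u u1 F1 S1 this, folded coord1_def]
  have "phi0 a = coord1 F * fst u" if "\<not> isolated G2 p2"
    using data1(2) that isolated_iff pa by simp
  note shift2 = kirchhoff_sol_shift_coord[OF G2 p2 u u2 F2 S2 this, folded coord2_def]
  have T1: "(\<lambda>e x. F (Inl e) x + (coord2 F - coord1 F) * s1 e x) = (\<lambda>e. transplant F (Inl e))"
    and T2: "(\<lambda>e x. F (Inr (Inl e)) x + (coord1 F - coord2 F) * s2 e x) = (\<lambda>e. transplant F (Inr (Inl e)))"
    and T0: "(\<lambda>e. transplant F (Inr (Inr e))) = (\<lambda>e. F (Inr (Inr e)))"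
    by (simp_all add: transplant_simps fun_eq_iff)
  show "glued_parts G1 G2 G0 p1 p2 b a ?z (transplant F)"
    unfolding glued_parts_def T0
    using shift1(1,2)[unfolded T1] shift2(1,2)[unfolded T2] F0 ka kb data1(1) data2(1)
    by (intro exI[of _ "(\<lambda>v. phi1 v + (coord2 F - coord1 F) * psi1 v)(p1 := phi0 b)"]
        exI[of _ "(\<lambda>v. phi2 v + (coord1 F - coord2 F) * psi2 v)(p2 := phi0 a)"] exI[of _ phi0]
        exI[of _ "\<lambda>e x. D1 e x + (coord2 F - coord1 F) * E1 e x"]
        exI[of _ "\<lambda>e x. D2 e x + (coord1 F - coord2 F) * E2 e x"] exI[of _ D0] conjI)
      (auto simp: insert_commute add_eq_0_iff)
  show "coord1 (transplant F) = coord2 F \<and> coord2 (transplant F) = coord1 F" if "\<not> isolated G1 p1"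
    using shift1(3)[OF that, unfolded T1] shift2(3)[unfolded T2] that isolated_iff
    by (simp add: coord1_def coord2_def)
qed

lemma transplant_involutive:
  assumes "glued_parts G1 G2 G0 p1 p2 a b (of_real lam) F"
  shows "transplant (transplant F) = F"
proof (cases "isolated G1 p1")
  case True
  then have "s1 = (\<lambda>e x. 0)" "s2 = (\<lambda>e x. 0)"
    using s1_isolated s2_isolated isolated_iff by (auto simp: fun_eq_iff)
  then have "transplant F' = F'" for F' :: "'e1 + 'e2 + 'e \<Rightarrow> real \<Rightarrow> complex"
    by (simp add: transplant_def fun_eq_iff split: sum.split)
  then show ?thesis by metis
next
  case False
  then have "coord1 (transplant F) = coord2 F" "coord2 (transplant F) = coord1 F"
    using transplant_parts(2)[OF assms] by auto
  then show ?thesis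
    unfolding transplant_def[of "transplant F"] by (simp add: transplant_def fun_eq_iff algebra_simps)
qed

lemma vanishes_off_transplant:
  assumes F: "vanishes_off (glued G1 G2 G0 p1 p2 a b) F"
  shows "vanishes_off (glued G1 G2 G0 p1 p2 a' b') (transplant F)"
proof -
  have "transplant F E x = 0"
    if "E \<notin> edges (glued G1 G2 G0 p1 p2 a' b') \<or> x \<notin> {0..elen (glued G1 G2 G0 p1 p2 a' b') E}" for E x
  proof -
    have "F E x = 0" using F that unfolding vanishes_off_def glued_simps by blast
    moreover have "s1 e x = 0" if "E = Inl e" for e
      using s1_vanishes \<open>E \<notin> _ \<or> _\<close> that unfolding vanishes_off_def by (auto simp: image_iff)
    moreover have "s2 e x = 0" if "E = Inr (Inl e)" for e
      using s2_vanishes \<open>E \<notin> _ \<or> _\<close> that unfolding vanishes_off_def by (auto simp: image_iff)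
    ultimately show ?thesis
      by (auto simp: transplant_def split: sum.split)
  qed
  then show ?thesis unfolding vanishes_off_def by blast
qed

lemma transplant_std_eigenfun:
  fixes G0 :: "('v, 'e) mgraph"
  assumes G0: "compact_mgraph G0" and ab: "a \<in> verts G0" "b \<in> verts G0" "a \<noteq> b"
    and F: "std_eigenfun (glued G1 G2 G0 p1 p2 a b) lam F"
  shows "std_eigenfun (glued G1 G2 G0 p1 p2 b a) lam (transplant F)"
    and "transplant (transplant F) = F"
proof -
  have parts: "glued_parts G1 G2 G0 p1 p2 a b (of_real lam) F"
    using F std_sol_glued_imp_parts[OF G1 G2 G0 p1 p2 ab] by (simp add: std_eigenfun_iff)
  show "std_eigenfun (glued G1 G2 G0 p1 p2 b a) lam (transplant F)"
    using F glued_parts_imp_std_sol[OF G1 G2 G0 p1 p2 ab(2,1) ab(3)[symmetric] transplant_parts(1)[OF parts]]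
    by (simp add: std_eigenfun_iff vanishes_off_transplant[of G0 a b F b a])
  show "transplant (transplant F) = F" by (rule transplant_involutive[OF parts])
qed

lemma transplant_lincomb:
  assumes "\<And>i. i < n \<Longrightarrow> helmholtz (glued G1 G2 G0 p1 p2 a b) z (F i) (D i)"
  shows "transplant (\<lambda>E x. \<Sum>i<n. c i * F i E x) = (\<lambda>E x. \<Sum>i<n. c i * transplant (F i) E x)"
proof -
  have "coord1 (\<lambda>E x. \<Sum>i<n. c i * F i E x) = (\<Sum>i<n. c i * coord1 (F i))"
    "coord2 (\<lambda>E x. \<Sum>i<n. c i * F i E x) = (\<Sum>i<n. c i * coord2 (F i))"
  proof -
    have "\<And>i. i < n \<Longrightarrow> helmholtz G1 z (\<lambda>e. F i (Inl e)) (\<lambda>e. D i (Inl e))"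
      "\<And>i. i < n \<Longrightarrow> helmholtz G2 z (\<lambda>e. F i (Inr (Inl e))) (\<lambda>e. D i (Inr (Inl e)))"
      using helmholtz_glued_parts(1,2)[OF assms] by blast+
    from boundary_coord_lincomb[where f = "\<lambda>i e. F i (Inl e)" and D = "\<lambda>i e. D i (Inl e)", OF G1 this(1)]
      boundary_coord_lincomb[where f = "\<lambda>i e. F i (Inr (Inl e))" and D = "\<lambda>i e. D i (Inr (Inl e))",
        OF G2 this(2)]
    show "coord1 (\<lambda>E x. \<Sum>i<n. c i * F i E x) = (\<Sum>i<n. c i * coord1 (F i))"
      "coord2 (\<lambda>E x. \<Sum>i<n. c i * F i E x) = (\<Sum>i<n. c i * coord2 (F i))"
      unfolding coord1_def coord2_def by simp_all
  qed
  then show ?thesis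
    unfolding transplant_def
    by (intro ext) (simp add: sum_distrib_right sum_subtractf sum.distrib algebra_simps)
qed

lemma transplant_zero: "transplant (\<lambda>E x. 0) = (\<lambda>E x. 0)"
  using boundary_coord_zero[OF G1] boundary_coord_zero[OF G2]
  by (simp add: transplant_def coord1_def coord2_def)

end

lemma std_eigenfun_lincomb:
  assumes F: "\<And>i. i < n \<Longrightarrow> std_eigenfun G lam (F i)"
  shows "std_eigenfun G lam (\<lambda>E x. \<Sum>i<n. c i * F i E x)"
proof -
  have "\<forall>i. \<exists>t. i < n \<longrightarrow> helmholtz G (of_real lam) (F i) (snd t) \<and> vertex_continuous G (F i) (fst t) \<and>
      (\<forall>v\<in>verts G. out_deriv G (snd t) v = 0)"
    using F unfolding std_eigenfun_def by fastforce
  then obtain T where T: "\<And>i. i < n \<Longrightarrow> helmholtz G (of_real lam) (F i) (snd (T i)) \<and>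
      vertex_continuous G (F i) (fst (T i)) \<and> (\<forall>v\<in>verts G. out_deriv G (snd (T i)) v = 0)"
    by metis
  have "helmholtz G (of_real lam) (\<lambda>E x. \<Sum>i<n. c i * F i E x) (\<lambda>E x. \<Sum>i<n. c i * snd (T i) E x)"
    by (rule helmholtz_lincomb) (use T in auto)
  moreover have "vertex_continuous G (\<lambda>E x. \<Sum>i<n. c i * F i E x) (\<lambda>v. \<Sum>i<n. c i * fst (T i) v)"
    using T unfolding vertex_continuous_def by auto
  moreover have "\<forall>v\<in>verts G. out_deriv G (\<lambda>E x. \<Sum>i<n. c i * snd (T i) E x) v = 0"
    using T by (simp add: out_deriv_lincomb)
  moreover have "vanishes_off G (\<lambda>E x. \<Sum>i<n. c i * F i E x)"
    using F unfolding std_eigenfun_iff vanishes_off_def by auto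
  ultimately show ?thesis unfolding std_eigenfun_iff std_sol_def by blast
qed

context transplant_setting
begin

text \<open>The transplantation is a linear injection between the eigenspaces.\<close>
lemma multiplicity_glued_le:
  fixes G0 :: "('v, 'e) mgraph"
  assumes G0: "compact_mgraph G0" and ab: "a \<in> verts G0" "b \<in> verts G0" "a \<noteq> b"
  shows "multiplicity_std (glued G1 G2 G0 p1 p2 a b) lam \<le> multiplicity_std (glued G1 G2 G0 p1 p2 b a) lam"
  unfolding multiplicity_std_def
proof (rule Sup_subset_mono, rule subsetI)
  let ?G = "glued G1 G2 G0 p1 p2 a b" and ?G' = "glued G1 G2 G0 p1 p2 b a"
  note T = transplant_std_eigenfun[OF G0 ab]
  fix m assume "m \<in> {enat n |n. \<exists>fs. (\<forall>i<n. std_eigenfun ?G lam (fs i)) \<and> lin_indep_family n fs}"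
  then obtain n fs where m: "m = enat n" and fs: "\<And>i. i < n \<Longrightarrow> std_eigenfun ?G lam (fs i)"
    and indep: "lin_indep_family n fs" by blast
  have "\<forall>i. \<exists>D. i < n \<longrightarrow> helmholtz ?G (of_real lam) (fs i) D"
    using fs unfolding std_eigenfun_def by blast
  then obtain D where D: "\<And>i. i < n \<Longrightarrow> helmholtz ?G (of_real lam) (fs i) (D i)" by metis
  have "lin_indep_family n (\<lambda>i. transplant (fs i))"
    unfolding lin_indep_family_def
  proof (intro allI impI)
    fix c :: "nat \<Rightarrow> complex" and i
    assume zero: "\<forall>e x. (\<Sum>i<n. c i * transplant (fs i) e x) = 0" and i: "i < n"
    define F where "F = (\<lambda>E x. \<Sum>i<n. c i * fs i E x)"
    have "transplant F = (\<lambda>E x. \<Sum>i<n. c i * transplant (fs i) E x)"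
      unfolding F_def by (rule transplant_lincomb[OF D])
    also have "\<dots> = (\<lambda>E x. 0)" using zero by auto
    finally have "transplant F = (\<lambda>E x. 0)" .
    then have "F = transplant (\<lambda>E x. 0)"
      using T(2)[OF std_eigenfun_lincomb[where F = fs and n = n and c = c, OF fs, folded F_def]] by simp
    then have "\<forall>e x. (\<Sum>i<n. c i * fs i e x) = 0"
      unfolding transplant_zero F_def by (simp add: fun_eq_iff)
    then show "c i = 0" using indep i unfolding lin_indep_family_def by blast
  qed
  moreover have "\<forall>i<n. std_eigenfun ?G' lam (transplant (fs i))"
    using T(1)[OF fs] by simp
  ultimately show "m \<in> {enat n |n. \<exists>fs. (\<forall>i<n. std_eigenfun ?G' lam (fs i)) \<and> lin_indep_family n fs}"
    unfolding m by (intro CollectI exI[of _ n] conjI refl exI[of _ "\<lambda>i. transplant (fs i)"])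
qed

end

lemma same_M_transplant_setting:
  assumes G1: "compact_mgraph G1" and G2: "compact_mgraph G2"
    and p1: "p1 \<in> verts G1" and p2: "p2 \<in> verts G2" and M: "same_M G1 p1 G2 p2"
  shows "\<exists>u s1 s2. transplant_setting G1 G2 p1 p2 lam u s1 s2"
proof -
  have iso: "isolated G1 p1 \<longleftrightarrow> isolated G2 p2"
    using same_M_isolated[OF G2 p2 M] same_M_isolated[OF G1 p1 same_M_sym[OF M]] by blast
  obtain u where u: "u \<noteq> (0, 0)" "u \<in> boundary_data G1 p1 (of_real lam)"
    "u \<in> boundary_data G2 p2 (of_real lam)"
    using same_M_common_boundary_data[OF G1 G2 p1 p2 M] by blast
  obtain s1 s2 where
    "\<exists>psi E. kirchhoff_sol G1 p1 (of_real lam) s1 psi E \<and> psi p1 = fst u \<and> out_deriv G1 E p1 = snd u"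
    "vanishes_off G1 s1" "isolated G1 p1 \<longrightarrow> (\<forall>e x. s1 e x = 0)"
    "\<exists>psi E. kirchhoff_sol G2 p2 (of_real lam) s2 psi E \<and> psi p2 = fst u \<and> out_deriv G2 E p2 = snd u"
    "vanishes_off G2 s2" "isolated G2 p2 \<longrightarrow> (\<forall>e x. s2 e x = 0)"
    using exists_boundary_sol[OF G1 p1 u(1,2)] exists_boundary_sol[OF G2 p2 u(1,3)] by blast
  then have "transplant_setting G1 G2 p1 p2 lam u s1 s2"
    using G1 G2 p1 p2 u iso by unfold_locales blast+
  then show ?thesis by blast
qed

theorem mainTheorem9:
  fixes \<Gamma>1 :: "('v1, 'e1) mgraph" and \<Gamma>2 :: "('v2, 'e2) mgraph"
    and \<Gamma> :: "('v, 'e) mgraph"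
    and p1 :: 'v1 and p2 :: 'v2 and a b :: 'v
  assumes "compact_mgraph \<Gamma>1" "compact_mgraph \<Gamma>2" "compact_mgraph \<Gamma>"
    and "p1 \<in> verts \<Gamma>1" "p2 \<in> verts \<Gamma>2"
    and "a \<in> verts \<Gamma>" "b \<in> verts \<Gamma>" "a \<noteq> b"
    and "same_M \<Gamma>1 p1 \<Gamma>2 p2"
  shows "isospectral_std
     (identify (identify (dunion \<Gamma>1 (dunion \<Gamma>2 \<Gamma>)) (Inl p1) (Inr (Inr a))) (Inr (Inl p2)) (Inr (Inr b)))
     (identify (identify (dunion \<Gamma>1 (dunion \<Gamma>2 \<Gamma>)) (Inr (Inl p2)) (Inr (Inr a))) (Inl p1) (Inr (Inr b)))"
  unfolding identify_identify_eq_glued isospectral_std_def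
proof
  fix lam
  obtain u s1 s2 where "transplant_setting \<Gamma>1 \<Gamma>2 p1 p2 lam u s1 s2"
    using same_M_transplant_setting[OF assms(1,2,4,5,9)] by blast
  then interpret transplant_setting \<Gamma>1 \<Gamma>2 p1 p2 lam u s1 s2 .
  show "multiplicity_std (glued \<Gamma>1 \<Gamma>2 \<Gamma> p1 p2 a b) lam = multiplicity_std (glued \<Gamma>1 \<Gamma>2 \<Gamma> p1 p2 b a) lam"
    using multiplicity_glued_le[OF assms(3,6-8)] multiplicity_glued_le[OF assms(3,7,6) assms(8)[symmetric]]
    by (rule antisym)
qed

end
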